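(* Let $f=p/q$ be a rational function with $p,q$ of degree $l$, positive on the standard simplex $\Delta$, with $b_\alpha(q,j,\Delta)>0$ for all $|\alpha|=j$, $j\ge l$, and let $\underline f=\min_{x\in\Delta}f(x)>0$. If the integer $k\ge l$ satisfies \[ k>\frac{\omega}{\underline f}+1, \] then $f$ satisfies the global certificate of positivity $\mathrm{Cert}(b(f,k,\Delta))$: $b_\alpha(f,k,\Delta)\ge 0$ for all $|\alpha|=k$ and $b_{k\hat e_i}(f,k,\Delta)>0$ for all $i=0,\dots,n$.
   Context: Notation as follows. $\Delta$ is the standard simplex in $\mathbb{R}^n$ with barycentric coordinates $\lambda=(1-\sum x_i,x_1,\dots,x_n)$; $B^{(k)}_\alpha=\frac{k!}{\alpha_0!\cdots\alpha_n!}\lambda^\alpha$ ($\alpha\in\mathbb{N}^{n+1}$, $|\alpha|=k$); $b_\alpha(p,k,\Delta)$ are Bernstein coefficients; $b_\alpha(f,k,\Delta)=b_\alpha(p,k,\Delta)/b_\alpha(q,k,\Delta)$; $\hat e_0,\dots,\hat e_n$ unit vectors of $\mathbb{R}^{n+1}$. The constant is $\omega:=\frac{n(n+2)l(l-1)}{24\min_{|\alpha|=l}b_\alpha(q,l,\Delta)}\big(\|\nabla^2p\|_\infty+\zeta\|\nabla^2q\|_\infty\big)$ with $\zeta:=\max\{|\min_{|\alpha|=l}b_\alpha(f,l,\Delta)|,|\max_{|\alpha|=l}b_\alpha(f,l,\Delta)|\}$, where, with convention $\hat e_{-1}:=\hat e_n$, $\|\nabla^2p\|_\infty=\max_{|\gamma|=l-2,0\le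 i<j\le n}|b_{\gamma+\hat e_i+\hat e_{j-1}}+b_{\gamma+\hat e_{i-1}+\hat e_j}-b_{\gamma+\hat e_{i-1}+\hat e_{j-1}}-b_{\gamma+\hat e_i+\hat e_j}|$ for $b=b(p,l,\Delta)$, and likewise for $q$. *)

theory Defs
  imports Complex_Main
begin

text \<open>Points of R^n are functions x :: nat => real, using coordinates x 1, ..., x n.
  Multi-indices alpha in N^(n+1) are functions nat => nat supported on {0..n}.\<close>

definition mindex :: "nat \<Rightarrow> nat \<Rightarrow> (nat \<Rightarrow> nat) set" where
  "mindex n k = {\<alpha>. (\<forall>i>n. \<alpha> i = 0) \<and> (\<Sum>i\<le>n. \<alpha> i) = k}"

definition monoms :: "nat \<Rightarrow> nat \<Rightarrow> (nat \<Rightarrow> nat) set" where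
  "monoms n l = {\<beta>. (\<forall>i. (i = 0 \<or> i > n) \<longrightarrow> \<beta> i = 0) \<and> (\<Sum>i\<in>{1..n}. \<beta> i) \<le> l}"

definition is_poly :: "nat \<Rightarrow> nat \<Rightarrow> ((nat \<Rightarrow> real) \<Rightarrow> real) \<Rightarrow> bool" where
  "is_poly n l P \<longleftrightarrow> (\<exists>c :: (nat \<Rightarrow> nat) \<Rightarrow> real.
      \<forall>x. P x = (\<Sum>\<beta>\<in>monoms n l. c \<beta> * (\<Prod>i\<in>{1..n}. x i ^ \<beta> i)))"

definition simplex :: "nat \<Rightarrow> (nat \<Rightarrow> real) set" where
  "simplex n = {x. (\<forall>i. (i = 0 \<or> i > n) \<longrightarrow> x i = 0) \<and> (\<forall>i\<in>{1..n}. 0 \<le> x i)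
                   \<and> (\<Sum>i\<in>{1..n}. x i) \<le> 1}"

definition bary :: "nat \<Rightarrow> (nat \<Rightarrow> real) \<Rightarrow> nat \<Rightarrow> real" where
  "bary n x i = (if i = 0 then 1 - (\<Sum>j\<in>{1..n}. x j) else x i)"

definition bern :: "nat \<Rightarrow> nat \<Rightarrow> (nat \<Rightarrow> nat) \<Rightarrow> (nat \<Rightarrow> real) \<Rightarrow> real" where
  "bern n k \<alpha> x = fact k / (\<Prod>i\<le>n. fact (\<alpha> i)) * (\<Prod>i\<le>n. bary n x i ^ \<alpha> i)"

definition bcoef :: "nat \<Rightarrow> nat \<Rightarrow> ((nat \<Rightarrow> real) \<Rightarrow> real) \<Rightarrow> (nat \<Rightarrow> nat) \<Rightarrow> real" where
  "bcoef n k P = (THE b. (\<forall>\<alpha>. \<alpha> \<notin> mindex n k \<longrightarrow> b \<alpha> = 0) \<and>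
        (\<forall>x. P x = (\<Sum>\<alpha>\<in>mindex n k. b \<alpha> * bern n k \<alpha> x)))"

definition bcoef_rat :: "nat \<Rightarrow> nat \<Rightarrow> ((nat \<Rightarrow> real) \<Rightarrow> real) \<Rightarrow> ((nat \<Rightarrow> real) \<Rightarrow> real)
    \<Rightarrow> (nat \<Rightarrow> nat) \<Rightarrow> real" where
  "bcoef_rat n k p q \<alpha> = bcoef n k p \<alpha> / bcoef n k q \<alpha>"

definition uvec :: "nat \<Rightarrow> nat \<Rightarrow> nat" where
  "uvec i = (\<lambda>j. if j = i then 1 else 0)"

definition madd3 :: "(nat \<Rightarrow> nat) \<Rightarrow> nat \<Rightarrow> nat \<Rightarrow> nat \<Rightarrow> nat" where
  "madd3 \<gamma> i j = (\<lambda>m. \<gamma> m + uvec i m + uvec j m)"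

definition prv :: "nat \<Rightarrow> nat \<Rightarrow> nat" where
  "prv n i = (if i = 0 then n else i - 1)"

definition hess_norm :: "nat \<Rightarrow> nat \<Rightarrow> ((nat \<Rightarrow> real) \<Rightarrow> real) \<Rightarrow> real" where
  "hess_norm n l P = Max {\<bar>bcoef n l P (madd3 \<gamma> i (prv n j))
                          + bcoef n l P (madd3 \<gamma> (prv n i) j)
                          - bcoef n l P (madd3 \<gamma> (prv n i) (prv n j))
                          - bcoef n l P (madd3 \<gamma> i j)\<bar> |
                        \<gamma> i j. \<gamma> \<in> mindex n (l - 2) \<and> i < j \<and> j \<le> n}"

definition zeta :: "nat \<Rightarrow> nat \<Rightarrow> ((nat \<Rightarrow> real) \<Rightarrow> real) \<Rightarrow> ((nat \<Rightarrow> real) \<Rightarrow> real) \<Rightarrow> real" where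
  "zeta n l p q = max \<bar>Min (bcoef_rat n l p q ` mindex n l)\<bar> \<bar>Max (bcoef_rat n l p q ` mindex n l)\<bar>"

definition omega :: "nat \<Rightarrow> nat \<Rightarrow> ((nat \<Rightarrow> real) \<Rightarrow> real) \<Rightarrow> ((nat \<Rightarrow> real) \<Rightarrow> real) \<Rightarrow> real" where
  "omega n l p q = real (n * (n + 2) * l * (l - 1)) / (24 * Min (bcoef n l q ` mindex n l))
                    * (hess_norm n l p + zeta n l p q * hess_norm n l q)"

end

theory Submission
  imports Defs "HOL-Computational_Algebra.Polynomial"
begin

text \<open>Let f be the minimum of p/q on the simplex and g = p - f q, which is nonnegative there.
  Summation by parts bounds the second differences of the degree-l Bernstein coefficients of g by
  the mixed differences collected in hess_norm, and degree elevation to degree k shrinks them by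
  the factor l(l-1)/(k(k-1)). The array \<psi>(\<beta>) = 1/2 \<Sum>_{a<b} (\<beta>_a + ... + \<beta>_{b-1})^2 has the
  dominating quadratic form as its second differences, so subtracting a multiple \<mu> \<psi> makes the
  degree-k coefficients of g concave. For concave coefficients the de Casteljau recursion yields
  Jensen's inequality: the Bernstein polynomial at the grid point \<alpha>/k is at most the coefficient
  of index \<alpha>. As the Bernstein polynomial of \<psi> exceeds \<psi>(\<alpha>) by at most k n (n + 2) / 24, this
  gives b_\<alpha>(g) \<ge> -\<mu> k n (n + 2) / 24, and b_\<alpha>(p) = b_\<alpha>(g) + f b_\<alpha>(q) > 0 once k - 1 > \<omega> / f.\<close>

section \<open>Multi-indices\<close>

lemma finite_mindex[simp]: "finite (mindex n k)"
proof -
  have "mindex n k \<subseteq> {f. \<forall>x. (x \<in> {..n} \<longrightarrow> f x \<in> {..k}) \<and> (x \<notin> {..n} \<longrightarrow> f x = 0)}"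
  proof
    fix f assume f: "f \<in> mindex n k"
    { fix x assume "x \<le> n"
      hence "f x \<le> (\<Sum>i\<le>n. f i)" by (intro member_le_sum) auto
      hence "f x \<le> k" using f by (simp add: mindex_def) }
    thus "f \<in> {f. \<forall>x. (x \<in> {..n} \<longrightarrow> f x \<in> {..k}) \<and> (x \<notin> {..n} \<longrightarrow> f x = 0)}"
      using f by (auto simp: mindex_def)
  qed
  thus ?thesis by (rule finite_subset) (intro finite_set_of_finite_funs, auto)
qed

lemma mindex_le_degree: "\<alpha> \<in> mindex n k \<Longrightarrow> i \<le> n \<Longrightarrow> \<alpha> i \<le> k"
proof -
  assume a: "\<alpha> \<in> mindex n k" "i \<le> n"
  hence "\<alpha> i \<le> (\<Sum>j\<le>n. \<alpha> j)" by (intro member_le_sum) auto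
  thus ?thesis using a by (simp add: mindex_def)
qed

lemma mindex_zero: "mindex n 0 = {\<lambda>_. 0}"
proof -
  { fix \<alpha> assume "\<alpha> \<in> mindex n 0"
    hence "\<alpha> = (\<lambda>_. 0)" unfolding mindex_def
      by (auto simp: fun_eq_iff) (metis atMost_iff not_le) }
  thus ?thesis by (auto simp: mindex_def)
qed

lemma sum_mindex_real: "\<beta> \<in> mindex n k \<Longrightarrow> (\<Sum>i\<le>n. real (\<beta> i)) = real k"
  unfolding mindex_def by (simp flip: of_nat_sum)

lemma atMost_eq_insert_0: "{..n::nat} = insert 0 {1..n}" by auto

lemma mindex_sum_split: "\<beta> \<in> mindex n k \<Longrightarrow> \<beta> 0 + (\<Sum>i\<in>{1..n}. \<beta> i) = k"
  unfolding mindex_def atMost_eq_insert_0 by simp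

lemma mindex_eqI:
  assumes "\<sigma> \<in> mindex n k" "\<tau> \<in> mindex n k" "\<forall>i\<in>{1..n}. \<sigma> i = \<tau> i"
  shows "\<sigma> = \<tau>"
proof
  fix i
  have "(\<Sum>i\<in>{1..n}. \<sigma> i) = (\<Sum>i\<in>{1..n}. \<tau> i)" using assms(3) by simp
  hence "\<sigma> 0 = \<tau> 0" using mindex_sum_split[OF assms(1)] mindex_sum_split[OF assms(2)] by simp
  moreover have "\<sigma> i = \<tau> i" if "i > n" using assms(1,2) that by (simp add: mindex_def)
  ultimately show "\<sigma> i = \<tau> i" using assms(3) by (cases "i = 0 \<or> i > n") auto
qed

lemma mindex_degree_unique: "\<beta> \<in> mindex n a \<Longrightarrow> \<beta> \<in> mindex n b \<Longrightarrow> a = b"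
  unfolding mindex_def by auto

lemma vertex_mindex: "i \<le> n \<Longrightarrow> (\<lambda>j. k * uvec i j) \<in> mindex n k"
  unfolding mindex_def by (auto simp: uvec_def sum_distrib_left[symmetric])

definition inc_at :: "(nat \<Rightarrow> nat) \<Rightarrow> nat \<Rightarrow> nat \<Rightarrow> nat" where
  "inc_at \<gamma> i = (\<lambda>m. \<gamma> m + uvec i m)"

definition dec_at :: "(nat \<Rightarrow> nat) \<Rightarrow> nat \<Rightarrow> nat \<Rightarrow> nat" where
  "dec_at \<gamma> i = (\<lambda>m. \<gamma> m - uvec i m)"

lemma inc_at_mindex: "\<gamma> \<in> mindex n k \<Longrightarrow> i \<le> n \<Longrightarrow> inc_at \<gamma> i \<in> mindex n (Suc k)"
  unfolding mindex_def inc_at_def by (auto simp: sum.distrib uvec_def)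

lemma dec_inc_at[simp]: "dec_at (inc_at \<gamma> i) i = \<gamma>"
  unfolding dec_at_def inc_at_def by auto

lemma inc_at_same[simp]: "inc_at \<gamma> i i = Suc (\<gamma> i)"
  by (simp add: inc_at_def uvec_def)

lemma inc_dec_at: "\<beta> i \<ge> 1 \<Longrightarrow> inc_at (dec_at \<beta> i) i = \<beta>"
  unfolding dec_at_def inc_at_def uvec_def by (auto simp: fun_eq_iff)

lemma dec_at_mindex: assumes "\<beta> \<in> mindex n (Suc k)" "i \<le> n" "\<beta> i \<ge> 1"
  shows "dec_at \<beta> i \<in> mindex n k"
proof -
  have "(\<Sum>m\<le>n. \<beta> m) = (\<Sum>m\<le>n. dec_at \<beta> i m) + (\<Sum>m\<le>n. uvec i m)"
    unfolding sum.distrib[symmetric] dec_at_def using assms(3)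
    by (intro sum.cong) (auto simp: uvec_def)
  thus ?thesis using assms unfolding mindex_def by (auto simp: dec_at_def uvec_def)
qed

lemma mindex_Suc_obtain:
  assumes "\<alpha> \<in> mindex n (Suc k)"
  obtains i \<alpha>' where "i \<le> n" "\<alpha>' \<in> mindex n k" "\<alpha> = inc_at \<alpha>' i"
proof -
  have "(\<Sum>j\<le>n. \<alpha> j) = Suc k" using assms by (simp add: mindex_def)
  then obtain i where i: "i \<le> n" "\<alpha> i \<ge> 1"
    by (metis (no_types, lifting) atMost_iff finite_atMost leI less_one nat.simps(3) sum_eq_0_iff)
  show ?thesis
    by (rule that[OF i(1) dec_at_mindex[OF assms i]]) (use inc_dec_at i(2) in simp)
qed

lemma inc_at_comm: "inc_at (inc_at \<gamma> i) j = inc_at (inc_at \<gamma> j) i"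
  unfolding inc_at_def by auto

lemma bij_betw_inc_at:
  "i \<le> n \<Longrightarrow> bij_betw (\<lambda>\<gamma>. inc_at \<gamma> i) (mindex n k) {\<beta> \<in> mindex n (Suc k). \<beta> i \<ge> 1}"
  by (rule bij_betw_byWitness[where f'="\<lambda>\<beta>. dec_at \<beta> i"])
    (use inc_at_mindex dec_at_mindex inc_dec_at in auto)

lemma sum_inc_at_reindex:
  fixes G :: "(nat \<Rightarrow> nat) \<Rightarrow> real"
  assumes "i \<le> n"
  shows "(\<Sum>\<gamma>\<in>mindex n k. real (Suc (\<gamma> i)) * G (inc_at \<gamma> i))
           = (\<Sum>\<beta>\<in>mindex n (Suc k). real (\<beta> i) * G \<beta>)"
proof -
  have e: "(\<Sum>\<gamma>\<in>mindex n k. (\<lambda>\<beta>. real (\<beta> i) * G \<beta>) (inc_at \<gamma> i))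
     = (\<Sum>\<beta>\<in>{\<beta> \<in> mindex n (Suc k). \<beta> i \<ge> 1}. real (\<beta> i) * G \<beta>)"
    by (rule sum.reindex_bij_betw[OF bij_betw_inc_at[OF assms]])
  have "(\<Sum>\<gamma>\<in>mindex n k. real (Suc (\<gamma> i)) * G (inc_at \<gamma> i))
     = (\<Sum>\<beta>\<in>{\<beta> \<in> mindex n (Suc k). \<beta> i \<ge> 1}. real (\<beta> i) * G \<beta>)"
    using e by simp
  also have "\<dots> = (\<Sum>\<beta>\<in>mindex n (Suc k). real (\<beta> i) * G \<beta>)"
    by (rule sum.mono_neutral_left) auto
  finally show ?thesis .
qed

lemma prod_inc_at:
  assumes "finite A" "i \<in> A"
  shows "(\<Prod>m\<in>A. F (inc_at \<gamma> i m) m) = F (Suc (\<gamma> i)) i * (\<Prod>m\<in>A-{i}. F (\<gamma> m) m)"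
proof -
  have "(\<Prod>m\<in>A. F (inc_at \<gamma> i m) m) = F (inc_at \<gamma> i i) i * (\<Prod>m\<in>A-{i}. F (inc_at \<gamma> i m) m)"
    using prod.remove[OF assms] by blast
  also have "(\<Prod>m\<in>A-{i}. F (inc_at \<gamma> i m) m) = (\<Prod>m\<in>A-{i}. F (\<gamma> m) m)"
    by (intro prod.cong) (auto simp: inc_at_def uvec_def)
  finally show ?thesis by simp
qed

lemma madd3_eq_inc_at: "madd3 \<gamma> i j = inc_at (inc_at \<gamma> i) j"
  unfolding madd3_def inc_at_def by auto

lemma madd3_mindex: "\<gamma> \<in> mindex n K \<Longrightarrow> i \<le> n \<Longrightarrow> j \<le> n \<Longrightarrow> madd3 \<gamma> i j \<in> mindex n (Suc (Suc K))"
  unfolding madd3_eq_inc_at by (intro inc_at_mindex) auto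

lemma madd3_comm: "madd3 \<gamma> i j = madd3 \<gamma> j i"
  unfolding madd3_def by auto

lemma inc_at_madd3: "inc_at (madd3 \<gamma> i j) m = madd3 (inc_at \<gamma> m) i j"
  unfolding inc_at_def madd3_def by auto

section \<open>Bernstein polynomials and the de Casteljau step\<close>

definition bernstein :: "nat \<Rightarrow> nat \<Rightarrow> (nat \<Rightarrow> nat) \<Rightarrow> (nat \<Rightarrow> real) \<Rightarrow> real" where
  "bernstein n k \<beta> T = fact k / (\<Prod>i\<le>n. fact (\<beta> i)) * (\<Prod>i\<le>n. T i ^ \<beta> i)"

lemma bern_eq_bernstein: "bern n k \<beta> x = bernstein n k \<beta> (bary n x)"
  unfolding bern_def bernstein_def ..

lemma bary_mult_bernstein:
  assumes "i \<le> n"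
  shows "T i * bernstein n k \<gamma> T
           = real (Suc (\<gamma> i)) / real (Suc k) * bernstein n (Suc k) (inc_at \<gamma> i) T"
proof -
  have f: "(\<Prod>m\<le>n. fact (inc_at \<gamma> i m) :: real) = real (Suc (\<gamma> i)) * (\<Prod>m\<le>n. fact (\<gamma> m))"
    using prod_inc_at[of "{..n}" i "\<lambda>a m. fact a :: real" \<gamma>] prod.remove[of "{..n}" i
      "\<lambda>m. fact (\<gamma> m) :: real"] assms
    by simp
  have p: "(\<Prod>m\<le>n. T m ^ inc_at \<gamma> i m) = T i * (\<Prod>m\<le>n. T m ^ \<gamma> m)"
    using prod_inc_at[of "{..n}" i "\<lambda>a m. T m ^ a" \<gamma>] prod.remove[of "{..n}" i "\<lambda>m. T m ^ \<gamma> m"]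
      assms
    by simp
  have nz: "(\<Prod>m\<le>n. fact (\<gamma> m) :: real) \<noteq> 0" by (simp add: prod_zero_iff)
  show ?thesis unfolding bernstein_def f p using nz
    by (simp del: of_nat_Suc add: field_simps)
qed

lemma sum_bary: "(\<Sum>i\<le>n. bary n x i) = 1"
  unfolding atMost_eq_insert_0 bary_def by simp

definition bern_eval :: "nat \<Rightarrow> nat \<Rightarrow> ((nat \<Rightarrow> nat) \<Rightarrow> real) \<Rightarrow> (nat \<Rightarrow> real) \<Rightarrow> real" where
  "bern_eval n k h T = (\<Sum>\<beta>\<in>mindex n k. bernstein n k \<beta> T * h \<beta>)"

definition casteljau :: "nat \<Rightarrow> (nat \<Rightarrow> real) \<Rightarrow> ((nat \<Rightarrow> nat) \<Rightarrow> real) \<Rightarrow> (nat \<Rightarrow> nat) \<Rightarrow> real" where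
  "casteljau n T h = (\<lambda>\<gamma>. \<Sum>i\<le>n. T i * h (inc_at \<gamma> i))"

lemma bern_eval_Suc: "bern_eval n (Suc k) h T = bern_eval n k (casteljau n T h) T"
proof -
  have "bern_eval n k (casteljau n T h) T
          = (\<Sum>\<gamma>\<in>mindex n k. \<Sum>i\<le>n. T i * bernstein n k \<gamma> T * h (inc_at \<gamma> i))"
    unfolding bern_eval_def casteljau_def
    by (simp add: sum_distrib_left mult.assoc mult.left_commute)
  also have "\<dots> = (\<Sum>i\<le>n. \<Sum>\<gamma>\<in>mindex n k. T i * bernstein n k \<gamma> T * h (inc_at \<gamma> i))"
    by (rule sum.swap)
  also have "\<dots> = (\<Sum>i\<le>n. \<Sum>\<gamma>\<in>mindex n k. real (Suc (\<gamma> i))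
               * (bernstein n (Suc k) (inc_at \<gamma> i) T * h (inc_at \<gamma> i) / real (Suc k)))"
    by (intro sum.cong refl) (simp add: bary_mult_bernstein)
  also have "\<dots> = (\<Sum>i\<le>n. \<Sum>\<beta>\<in>mindex n (Suc k). real (\<beta> i)
               * (bernstein n (Suc k) \<beta> T * h \<beta> / real (Suc k)))"
    by (intro sum.cong refl sum_inc_at_reindex) auto
  also have "\<dots> = (\<Sum>\<beta>\<in>mindex n (Suc k). (\<Sum>i\<le>n. real (\<beta> i))
               * (bernstein n (Suc k) \<beta> T * h \<beta> / real (Suc k)))"
    by (subst sum.swap) (simp add: sum_distrib_right sum_divide_distrib)
  also have "\<dots> = (\<Sum>\<beta>\<in>mindex n (Suc k). bernstein n (Suc k) \<beta> T * h \<beta>)"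
    by (intro sum.cong refl) (simp add: sum_mindex_real)
  finally show ?thesis unfolding bern_eval_def ..
qed

lemma bern_eval_0: "bern_eval n 0 h T = h (\<lambda>_. 0)"
  unfolding bern_eval_def mindex_zero bernstein_def by simp

lemma bern_eval_const: "bern_eval n k (\<lambda>_. c) T = c * (\<Sum>i\<le>n. T i) ^ k"
proof (induction k arbitrary: c)
  case 0 thus ?case by (simp add: bern_eval_0)
next
  case (Suc k)
  have "casteljau n T (\<lambda>_. c) = (\<lambda>_. c * (\<Sum>i\<le>n. T i))"
    unfolding casteljau_def by (simp add: sum_distrib_left mult.commute)
  thus ?case by (simp add: bern_eval_Suc Suc)
qed

lemma bern_eval_add: "bern_eval n k (\<lambda>\<beta>. f \<beta> + g \<beta>) T = bern_eval n k f T + bern_eval n k g T"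
  unfolding bern_eval_def by (simp add: distrib_left sum.distrib)

lemma bern_eval_diff: "bern_eval n k (\<lambda>\<beta>. f \<beta> - g \<beta>) T = bern_eval n k f T - bern_eval n k g T"
  unfolding bern_eval_def by (simp add: right_diff_distrib sum_subtractf)

lemma bern_eval_scale: "bern_eval n k (\<lambda>\<beta>. a * f \<beta>) T = a * bern_eval n k f T"
  unfolding bern_eval_def by (simp add: sum_distrib_left mult_ac)

lemma bern_eval_sum: "finite A \<Longrightarrow> bern_eval n k (\<lambda>\<beta>. \<Sum>x\<in>A. f x \<beta>) T = (\<Sum>x\<in>A. bern_eval n k (f x) T)"
  unfolding bern_eval_def by (simp add: sum_distrib_left sum.swap[of _ A])

lemma casteljau_add_weights:
  "casteljau n (\<lambda>i. u i + v i) h = (\<lambda>\<gamma>. casteljau n u h \<gamma> + casteljau n v h \<gamma>)"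
  unfolding casteljau_def by (simp add: distrib_right sum.distrib)

lemma casteljau_scale_weights: "casteljau n (\<lambda>i. s * u i) h = (\<lambda>\<gamma>. s * casteljau n u h \<gamma>)"
  unfolding casteljau_def by (simp add: sum_distrib_left mult.assoc)

lemma casteljau_add: "casteljau n T (\<lambda>\<beta>. f \<beta> + g \<beta>) = (\<lambda>\<gamma>. casteljau n T f \<gamma> + casteljau n T g \<gamma>)"
  unfolding casteljau_def by (simp add: distrib_left sum.distrib)

lemma casteljau_diff: "casteljau n T (\<lambda>\<beta>. f \<beta> - g \<beta>) = (\<lambda>\<gamma>. casteljau n T f \<gamma> - casteljau n T g \<gamma>)"
  unfolding casteljau_def by (simp add: right_diff_distrib sum_subtractf)

lemma casteljau_scale: "casteljau n T (\<lambda>\<beta>. s * f \<beta>) = (\<lambda>\<gamma>. s * casteljau n T f \<gamma>)"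
  unfolding casteljau_def by (simp add: sum_distrib_left algebra_simps)

lemma casteljau_sum:
  "finite A \<Longrightarrow> casteljau n T (\<lambda>\<beta>. \<Sum>x\<in>A. f x \<beta>) = (\<lambda>\<gamma>. \<Sum>x\<in>A. casteljau n T (f x) \<gamma>)"
  by (induction A rule: finite_induct) (simp_all add: casteljau_add, simp add: casteljau_def)

lemma casteljau_comm: "casteljau n a (casteljau n b h) = casteljau n b (casteljau n a h)"
proof
  fix \<gamma>
  have "casteljau n a (casteljau n b h) \<gamma> = (\<Sum>i\<le>n. \<Sum>j\<le>n. a i * b j * h (inc_at (inc_at \<gamma> i) j))"
    unfolding casteljau_def by (simp add: sum_distrib_left mult.assoc)
  also have "\<dots> = (\<Sum>j\<le>n. \<Sum>i\<le>n. a i * b j * h (inc_at (inc_at \<gamma> i) j))" by (rule sum.swap)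
  also have "\<dots> = casteljau n b (casteljau n a h) \<gamma>"
    unfolding casteljau_def by (simp add: sum_distrib_left inc_at_comm mult_ac)
  finally show "casteljau n a (casteljau n b h) \<gamma> = casteljau n b (casteljau n a h) \<gamma>" .
qed

definition casteljau_iter ::
  "nat \<Rightarrow> (nat \<Rightarrow> real) \<Rightarrow> nat \<Rightarrow> ((nat \<Rightarrow> nat) \<Rightarrow> real) \<Rightarrow> (nat \<Rightarrow> nat) \<Rightarrow> real" where
  "casteljau_iter n T r h = (casteljau n T ^^ r) h"

lemma casteljau_iter_0[simp]: "casteljau_iter n T 0 h = h"
  unfolding casteljau_iter_def by simp

lemma casteljau_iter_Suc: "casteljau_iter n T (Suc r) h = casteljau n T (casteljau_iter n T r h)"
  unfolding casteljau_iter_def by simp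

lemma casteljau_iter_Suc': "casteljau_iter n T (Suc r) h = casteljau_iter n T r (casteljau n T h)"
  unfolding casteljau_iter_def by (simp add: funpow_swap1)

lemma bern_eval_casteljau_iter: "bern_eval n k h T = casteljau_iter n T k h (\<lambda>_. 0)"
proof (induction k arbitrary: h)
  case 0 thus ?case by (simp add: bern_eval_0)
next
  case (Suc k) thus ?case by (simp add: bern_eval_Suc casteljau_iter_Suc')
qed

lemma casteljau_iter_add:
  "casteljau_iter n T r (\<lambda>\<beta>. f \<beta> + g \<beta>) = (\<lambda>\<gamma>. casteljau_iter n T r f \<gamma> + casteljau_iter n T r g \<gamma>)"
  by (induction r) (simp_all add: casteljau_iter_Suc casteljau_add)

lemma casteljau_iter_diff:
  "casteljau_iter n T r (\<lambda>\<beta>. f \<beta> - g \<beta>) = (\<lambda>\<gamma>. casteljau_iter n T r f \<gamma> - casteljau_iter n T r g \<gamma>)"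
  by (induction r) (simp_all add: casteljau_iter_Suc casteljau_diff)

lemma casteljau_iter_scale:
  "casteljau_iter n T r (\<lambda>\<beta>. s * f \<beta>) = (\<lambda>\<gamma>. s * casteljau_iter n T r f \<gamma>)"
  by (induction r) (simp_all add: casteljau_iter_Suc casteljau_scale)

lemma casteljau_iter_scale_weights:
  "casteljau_iter n (\<lambda>i. s * u i) r h = (\<lambda>\<gamma>. s ^ r * casteljau_iter n u r h \<gamma>)"
  by (induction r)
    (simp_all add: casteljau_iter_Suc casteljau_scale_weights casteljau_scale mult.assoc)

lemma casteljau_casteljau_iter_comm:
  "casteljau n a (casteljau_iter n b r h) = casteljau_iter n b r (casteljau n a h)"
  by (induction r) (auto simp: casteljau_iter_Suc casteljau_comm[of n a b])

lemma casteljau_iter_binomial: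
  "casteljau_iter n (\<lambda>i. u i + v i) K h
     = (\<lambda>\<gamma>. \<Sum>r\<le>K. real (K choose r) * casteljau_iter n u (K - r) (casteljau_iter n v r h) \<gamma>)"
proof (induction K)
  case 0 thus ?case by simp
next
  case (Suc K)
  define G where "G r = casteljau_iter n u (Suc K - r) (casteljau_iter n v r h)" for r
  define F where "F r = casteljau_iter n u (K - r) (casteljau_iter n v r h)" for r
  have "casteljau_iter n (\<lambda>i. u i + v i) (Suc K) h
      = casteljau n (\<lambda>i. u i + v i) (\<lambda>\<gamma>. \<Sum>r\<le>K. real (K choose r) * F r \<gamma>)"
    unfolding F_def by (simp add: casteljau_iter_Suc Suc)
  also have "\<dots> = (\<lambda>\<gamma>. (\<Sum>r\<le>K. real (K choose r) * casteljau n u (F r) \<gamma>)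
                   + (\<Sum>r\<le>K. real (K choose r) * casteljau n v (F r) \<gamma>))"
    by (simp add: casteljau_add_weights casteljau_sum casteljau_scale)
  also have "\<dots> = (\<lambda>\<gamma>. (\<Sum>r\<le>K. real (K choose r) * G r \<gamma>) + (\<Sum>r\<le>K. real (K choose r) * G (Suc r) \<gamma>))"
  proof -
    have "casteljau n u (F r) = G r" if "r \<le> K" for r
      unfolding F_def G_def using that by (simp add: casteljau_iter_Suc[symmetric] Suc_diff_le)
    moreover have "casteljau n v (F r) = G (Suc r)" for r
      unfolding F_def G_def by (simp add: casteljau_casteljau_iter_comm casteljau_iter_Suc)
    ultimately show ?thesis by (intro ext arg_cong2[where f="(+)"] sum.cong) auto
  qed
  also have "\<dots> = (\<lambda>\<gamma>. \<Sum>r\<le>Suc K. real (Suc K choose r) * G r \<gamma>)"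
  proof
    fix \<gamma>
    have "(\<Sum>r\<le>Suc K. real (Suc K choose r) * G r \<gamma>)
            = G 0 \<gamma> + (\<Sum>r\<le>K. real (Suc K choose Suc r) * G (Suc r) \<gamma>)"
      by (subst sum.atMost_Suc_shift) simp
    also have "\<dots> = G 0 \<gamma> + (\<Sum>r\<le>K. real (K choose Suc r) * G (Suc r) \<gamma>)
                 + (\<Sum>r\<le>K. real (K choose r) * G (Suc r) \<gamma>)"
      by (simp add: distrib_right sum.distrib)
    also have "G 0 \<gamma> + (\<Sum>r\<le>K. real (K choose Suc r) * G (Suc r) \<gamma>)
                 = (\<Sum>r\<le>Suc K. real (K choose r) * G r \<gamma>)"
      by (subst sum.atMost_Suc_shift) simp
    also have "\<dots> = (\<Sum>r\<le>K. real (K choose r) * G r \<gamma>)" by simp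
    finally show "(\<Sum>r\<le>K. real (K choose r) * G r \<gamma>) + (\<Sum>r\<le>K. real (K choose r) * G (Suc r) \<gamma>)
        = (\<Sum>r\<le>Suc K. real (Suc K choose r) * G r \<gamma>)" by simp
  qed
  finally show ?case unfolding G_def .
qed

lemma casteljau_iter_nonpos:
  assumes T: "\<forall>i\<le>n. T i \<ge> 0"
  shows "(\<forall>\<beta>\<in>mindex n (s + r). f \<beta> \<le> 0) \<Longrightarrow> \<forall>\<gamma>\<in>mindex n s. casteljau_iter n T r f \<gamma> \<le> 0"
proof (induction r arbitrary: s)
  case 0 thus ?case by simp
next
  case (Suc r)
  show ?case
  proof
    fix \<gamma> assume g: "\<gamma> \<in> mindex n s"
    have "\<forall>\<gamma>\<in>mindex n (Suc s). casteljau_iter n T r f \<gamma> \<le> 0" using Suc.IH[of "Suc s"] Suc.prems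
      by simp
    hence "\<forall>i\<le>n. casteljau_iter n T r f (inc_at \<gamma> i) \<le> 0" using inc_at_mindex[OF g] by blast
    hence "(\<Sum>i\<le>n. T i * casteljau_iter n T r f (inc_at \<gamma> i)) \<le> 0"
      using T by (intro sum_nonpos) (simp add: mult_nonneg_nonpos)
    thus "casteljau_iter n T (Suc r) f \<gamma> \<le> 0" by (simp add: casteljau_iter_Suc casteljau_def)
  qed
qed

section \<open>Linear independence of the Bernstein basis\<close>

lemma poly_zero_on_pos:
  fixes c :: "nat \<Rightarrow> real"
  assumes R: "finite R" and z: "\<forall>t>0. (\<Sum>r\<in>R. c r * t ^ r) = 0"
  shows "\<forall>r\<in>R. c r = 0"
proof -
  define p where "p = (\<Sum>r\<in>R. monom (c r) r)"
  have pe: "poly p t = (\<Sum>r\<in>R. c r * t ^ r)" for t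
    unfolding p_def by (simp add: poly_sum poly_monom)
  have "p = 0"
  proof (rule ccontr)
    assume "p \<noteq> 0"
    hence "finite {t. poly p t = 0}" by (rule poly_roots_finite)
    moreover have "{0<..} \<subseteq> {t. poly p t = 0}" using z pe by auto
    ultimately have "finite {0::real<..}" by (rule finite_subset[rotated])
    thus False using infinite_Ioi by blast
  qed
  have "coeff p r = c r" if "r \<in> R" for r
    unfolding p_def coeff_sum coeff_monom using R that by (simp add: sum.delta)
  thus ?thesis using \<open>p = 0\<close> by auto
qed

lemma monomials_slice_zero_on_pos:
  fixes a :: "(nat \<Rightarrow> nat) \<Rightarrow> real"
  assumes S: "finite S"
    and zero: "\<forall>y. (\<forall>i\<in>{1..Suc m}. y i > 0) \<longrightarrow> (\<Sum>\<sigma>\<in>S. a \<sigma> * (\<Prod>i\<in>{1..Suc m}. y i ^ \<sigma> i)) = 0"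
    and y: "\<forall>i\<in>{1..m}. y i > 0"
  shows "(\<Sum>\<sigma>\<in>{\<sigma>\<in>S. \<sigma> (Suc m) = r}. a \<sigma> * (\<Prod>i\<in>{1..m}. y i ^ \<sigma> i)) = 0"
proof -
  define R where "R = (\<lambda>\<sigma>. \<sigma> (Suc m)) ` S"
  define C where "C r = (\<Sum>\<sigma>\<in>{\<sigma>\<in>S. \<sigma> (Suc m) = r}. a \<sigma> * (\<Prod>i\<in>{1..m}. y i ^ \<sigma> i))" for r
  have "(\<Sum>r\<in>R. C r * t ^ r) = 0" if t: "t > 0" for t
  proof -
    define y' where "y' = y(Suc m := t)"
    have prod_y': "(\<Prod>i\<in>{1..Suc m}. y' i ^ \<sigma> i) = (\<Prod>i\<in>{1..m}. y i ^ \<sigma> i) * t ^ \<sigma> (Suc m)" for \<sigma>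
    proof -
      have "{1..Suc m} = insert (Suc m) {1..m}" by auto
      moreover have "(\<Prod>i\<in>{1..m}. y' i ^ \<sigma> i) = (\<Prod>i\<in>{1..m}. y i ^ \<sigma> i)"
        unfolding y'_def by (intro prod.cong) auto
      ultimately show ?thesis unfolding y'_def by simp
    qed
    have "\<forall>i\<in>{1..Suc m}. y' i > 0" using y t unfolding y'_def by auto
    hence "0 = (\<Sum>\<sigma>\<in>S. a \<sigma> * (\<Prod>i\<in>{1..Suc m}. y' i ^ \<sigma> i))" using zero by simp
    also have "\<dots> = (\<Sum>r\<in>R. \<Sum>\<sigma>\<in>{\<sigma>\<in>S. \<sigma> (Suc m) = r}. a \<sigma> * (\<Prod>i\<in>{1..Suc m}. y' i ^ \<sigma> i))"
      unfolding R_def by (rule sum.image_gen[OF S])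
    also have "\<dots> = (\<Sum>r\<in>R. C r * t ^ r)"
      unfolding C_def sum_distrib_right by (intro sum.cong refl) (subst prod_y', auto)
    finally show ?thesis by simp
  qed
  hence "\<forall>r\<in>R. C r = 0" by (intro poly_zero_on_pos) (auto simp: R_def S)
  moreover have "C r = 0" if "r \<notin> R"
    unfolding C_def using that by (intro sum.neutral) (auto simp: R_def)
  ultimately show ?thesis unfolding C_def by blast
qed

lemma monomials_zero_on_pos:
  fixes a :: "(nat \<Rightarrow> nat) \<Rightarrow> real"
  assumes "finite S" "\<forall>\<sigma>\<in>S. \<forall>\<tau>\<in>S. (\<forall>i\<in>{1..m}. \<sigma> i = \<tau> i) \<longrightarrow> \<sigma> = \<tau>"
    "\<forall>y. (\<forall>i\<in>{1..m}. y i > 0) \<longrightarrow> (\<Sum>\<sigma>\<in>S. a \<sigma> * (\<Prod>i\<in>{1..m}. y i ^ \<sigma> i)) = 0"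
  shows "\<forall>\<sigma>\<in>S. a \<sigma> = 0"
  using assms
proof (induction m arbitrary: S a)
  case 0
  show ?case
  proof
    fix \<sigma> assume "\<sigma> \<in> S"
    hence "S = {\<sigma>}" using "0.prems"(2) by auto
    thus "a \<sigma> = 0" using "0.prems"(3) by auto
  qed
next
  case (Suc m)
  show ?case
  proof
    fix \<sigma>0 assume \<sigma>0: "\<sigma>0 \<in> S"
    define S' where "S' = {\<sigma>\<in>S. \<sigma> (Suc m) = \<sigma>0 (Suc m)}"
    have "finite S'" using Suc.prems(1) unfolding S'_def by simp
    moreover have "\<forall>\<sigma>\<in>S'. \<forall>\<tau>\<in>S'. (\<forall>i\<in>{1..m}. \<sigma> i = \<tau> i) \<longrightarrow> \<sigma> = \<tau>"
    proof (intro ballI impI)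
      fix \<sigma> \<tau> assume st: "\<sigma> \<in> S'" "\<tau> \<in> S'" "\<forall>i\<in>{1..m}. \<sigma> i = \<tau> i"
      hence "\<forall>i\<in>{1..Suc m}. \<sigma> i = \<tau> i" unfolding S'_def by (auto simp: le_Suc_eq)
      thus "\<sigma> = \<tau>" using Suc.prems(2) st(1,2) unfolding S'_def by blast
    qed
    moreover have "\<forall>y. (\<forall>i\<in>{1..m}. y i > 0) \<longrightarrow> (\<Sum>\<sigma>\<in>S'. a \<sigma> * (\<Prod>i\<in>{1..m}. y i ^ \<sigma> i)) = 0"
      unfolding S'_def using monomials_slice_zero_on_pos[OF Suc.prems(1,3)] by blast
    ultimately have "\<forall>\<sigma>\<in>S'. a \<sigma> = 0" by (rule Suc.IH)
    thus "a \<sigma>0 = 0" using \<sigma>0 unfolding S'_def by auto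
  qed
qed

text \<open>At the point x = y / (1 + \<Sum>y) of the simplex, a Bernstein polynomial is the monomial y^\<beta>
  up to a factor independent of \<beta>; this dehomogenisation reduces linear independence of the
  Bernstein basis to that of monomials.\<close>

lemma bern_dehomogenize:
  fixes y :: "nat \<Rightarrow> real"
  assumes y: "\<forall>i\<in>{1..n}. y i \<ge> 0" and \<beta>: "\<beta> \<in> mindex n k"
  defines "S \<equiv> \<Sum>j\<in>{1..n}. y j"
  shows "bern n k \<beta> (\<lambda>i. if i \<in> {1..n} then y i / (1 + S) else 0)
       = (1 / (1 + S)) ^ k * (fact k / (\<Prod>i\<le>n. fact (\<beta> i))) * (\<Prod>i\<in>{1..n}. y i ^ \<beta> i)"
proof -
  define x where "x = (\<lambda>i. if i \<in> {1..n} then y i / (1 + S) else 0)"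
  have "S \<ge> 0" unfolding S_def using y by (intro sum_nonneg) auto
  hence S1: "1 + S \<noteq> 0" by simp
  have "(\<Sum>j\<in>{1..n}. x j) = S / (1 + S)"
    unfolding x_def S_def by (simp add: sum_divide_distrib)
  hence bary0: "bary n x 0 = 1 / (1 + S)" unfolding bary_def using S1 by (simp add: field_simps)
  have "(\<Prod>i\<le>n. bary n x i ^ \<beta> i) = bary n x 0 ^ \<beta> 0 * (\<Prod>i\<in>{1..n}. bary n x i ^ \<beta> i)"
    unfolding atMost_eq_insert_0 by simp
  also have "(\<Prod>i\<in>{1..n}. bary n x i ^ \<beta> i) = (\<Prod>i\<in>{1..n}. y i ^ \<beta> i * (1 / (1 + S)) ^ \<beta> i)"
    by (intro prod.cong refl) (simp add: bary_def x_def power_mult_distrib[symmetric])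
  also have "\<dots> = (\<Prod>i\<in>{1..n}. y i ^ \<beta> i) * (1 / (1 + S)) ^ (\<Sum>i\<in>{1..n}. \<beta> i)"
    by (simp add: prod.distrib power_sum)
  finally have "(\<Prod>i\<le>n. bary n x i ^ \<beta> i) = (1 / (1 + S)) ^ k * (\<Prod>i\<in>{1..n}. y i ^ \<beta> i)"
    using mindex_sum_split[OF \<beta>] by (simp add: bary0 power_add[symmetric])
  thus ?thesis unfolding bern_def x_def[symmetric] by simp
qed

lemma bern_lin_indep:
  assumes zero: "\<forall>x. (\<Sum>\<beta>\<in>mindex n k. c \<beta> * bern n k \<beta> x) = 0"
  shows "\<forall>\<beta>\<in>mindex n k. c \<beta> = 0"
proof -
  define a where "a \<beta> = c \<beta> * (fact k / (\<Prod>i\<le>n. fact (\<beta> i)))" for \<beta>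
  have "(\<Sum>\<beta>\<in>mindex n k. a \<beta> * (\<Prod>i\<in>{1..n}. y i ^ \<beta> i)) = 0" if y: "\<forall>i\<in>{1..n}. y i > 0" for y
  proof -
    define S where "S = (\<Sum>j\<in>{1..n}. y j)"
    have "S \<ge> 0" unfolding S_def using y by (intro sum_nonneg) (auto intro: less_imp_le)
    have "0 = (\<Sum>\<beta>\<in>mindex n k. c \<beta> * bern n k \<beta> (\<lambda>i. if i \<in> {1..n} then y i / (1 + S) else 0))"
      using zero by simp
    also have "\<dots> = (1 / (1 + S)) ^ k * (\<Sum>\<beta>\<in>mindex n k. a \<beta> * (\<Prod>i\<in>{1..n}. y i ^ \<beta> i))"
    proof -
      have "bern n k \<beta> (\<lambda>i. if i \<in> {1..n} then y i / (1 + S) else 0)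
          = (1 / (1 + S)) ^ k * (fact k / (\<Prod>i\<le>n. fact (\<beta> i))) * (\<Prod>i\<in>{1..n}. y i ^ \<beta> i)"
        if "\<beta> \<in> mindex n k" for \<beta>
        unfolding S_def using y that by (intro bern_dehomogenize) (auto intro: less_imp_le)
      thus ?thesis unfolding sum_distrib_left a_def by (intro sum.cong refl) (simp only:, simp)
    qed
    finally show ?thesis using \<open>S \<ge> 0\<close> by simp
  qed
  hence "\<forall>\<sigma>\<in>mindex n k. a \<sigma> = 0"
    by (intro monomials_zero_on_pos) (auto intro: mindex_eqI)
  moreover have "fact k / (\<Prod>i\<le>n. fact (\<beta> i)) \<noteq> (0::real)" for \<beta>
    by (simp add: prod_zero_iff)
  ultimately show ?thesis unfolding a_def by auto
qed

section \<open>Bernstein coefficients and degree elevation\<close>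

definition bern_repr :: "nat \<Rightarrow> nat \<Rightarrow> ((nat \<Rightarrow> real) \<Rightarrow> real) \<Rightarrow> ((nat \<Rightarrow> nat) \<Rightarrow> real) \<Rightarrow> bool" where
  "bern_repr n k f c \<longleftrightarrow> (\<forall>\<beta>. \<beta> \<notin> mindex n k \<longrightarrow> c \<beta> = 0)
       \<and> (\<forall>x. f x = (\<Sum>\<beta>\<in>mindex n k. c \<beta> * bern n k \<beta> x))"

lemma bern_repr_unique: assumes "bern_repr n k f c" "bern_repr n k f c'" shows "c' = c"
proof
  fix \<beta>
  have "\<forall>x. (\<Sum>\<beta>\<in>mindex n k. (c' \<beta> - c \<beta>) * bern n k \<beta> x) = 0"
    using assms unfolding bern_repr_def by (simp add: left_diff_distrib sum_subtractf)
  hence "\<forall>\<beta>\<in>mindex n k. c' \<beta> - c \<beta> = 0" by (rule bern_lin_indep)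
  thus "c' \<beta> = c \<beta>" using assms unfolding bern_repr_def by (cases "\<beta> \<in> mindex n k") auto
qed

lemma bcoef_eqI: assumes "bern_repr n k f c" shows "bcoef n k f = c"
  unfolding bcoef_def
proof (rule the_equality)
  show "(\<forall>\<alpha>. \<alpha> \<notin> mindex n k \<longrightarrow> c \<alpha> = 0) \<and> (\<forall>x. f x = (\<Sum>\<alpha>\<in>mindex n k. c \<alpha> * bern n k \<alpha> x))"
    using assms unfolding bern_repr_def .
  fix b assume "(\<forall>\<alpha>. \<alpha> \<notin> mindex n k \<longrightarrow> b \<alpha> = 0) \<and> (\<forall>x. f x = (\<Sum>\<alpha>\<in>mindex n k. b \<alpha> * bern n k \<alpha> x))"
  hence "bern_repr n k f b" unfolding bern_repr_def .
  thus "b = c" using bern_repr_unique[OF assms] by blast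
qed

definition mult_bary_coef :: "nat \<Rightarrow> nat \<Rightarrow> nat \<Rightarrow> ((nat \<Rightarrow> nat) \<Rightarrow> real) \<Rightarrow> (nat \<Rightarrow> nat) \<Rightarrow> real" where
  "mult_bary_coef n k i c =
     (\<lambda>\<beta>. if \<beta> \<in> mindex n (Suc k) then real (\<beta> i) / real (Suc k) * c (dec_at \<beta> i) else 0)"

lemma bern_repr_mult_bary:
  assumes i: "i \<le> n" and r: "bern_repr n k f c"
  shows "bern_repr n (Suc k) (\<lambda>x. bary n x i * f x) (mult_bary_coef n k i c)"
  unfolding bern_repr_def
proof (intro conjI allI impI)
  fix \<beta> assume "\<beta> \<notin> mindex n (Suc k)"
  thus "mult_bary_coef n k i c \<beta> = 0" unfolding mult_bary_coef_def by simp
next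
  fix x
  define T where "T = bary n x"
  have "bary n x i * f x = (\<Sum>\<beta>\<in>mindex n k. c \<beta> * (T i * bernstein n k \<beta> T))"
    using r unfolding bern_repr_def T_def bern_eq_bernstein
    by (simp add: sum_distrib_left mult.left_commute)
  also have "\<dots> = (\<Sum>\<gamma>\<in>mindex n k. real (Suc (\<gamma> i))
               * (c (dec_at (inc_at \<gamma> i) i) * bernstein n (Suc k) (inc_at \<gamma> i) T / real (Suc k)))"
    by (intro sum.cong refl) (simp add: bary_mult_bernstein[OF i])
  also have "\<dots> = (\<Sum>\<beta>\<in>mindex n (Suc k). real (\<beta> i)
               * (c (dec_at \<beta> i) * bernstein n (Suc k) \<beta> T / real (Suc k)))"
    by (rule sum_inc_at_reindex[OF i])
  also have "\<dots> = (\<Sum>\<beta>\<in>mindex n (Suc k). mult_bary_coef n k i c \<beta> * bern n (Suc k) \<beta> x)"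
    by (intro sum.cong refl) (simp add: mult_bary_coef_def bern_eq_bernstein T_def)
  finally show "bary n x i * f x
                  = (\<Sum>\<beta>\<in>mindex n (Suc k). mult_bary_coef n k i c \<beta> * bern n (Suc k) \<beta> x)" .
qed

lemma bern_repr_add:
  "bern_repr n k f c \<Longrightarrow> bern_repr n k g d \<Longrightarrow> bern_repr n k (\<lambda>x. f x + g x) (\<lambda>\<beta>. c \<beta> + d \<beta>)"
  unfolding bern_repr_def by (simp add: distrib_right sum.distrib)

lemma bern_repr_scale: "bern_repr n k f c \<Longrightarrow> bern_repr n k (\<lambda>x. a * f x) (\<lambda>\<beta>. a * c \<beta>)"
  unfolding bern_repr_def by (simp add: sum_distrib_left mult.assoc)

lemma bern_repr_zero: "bern_repr n k (\<lambda>x. 0) (\<lambda>\<beta>. 0)"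
  unfolding bern_repr_def by simp

lemma bern_repr_sum:
  assumes "finite I" "\<forall>i\<in>I. bern_repr n k (f i) (c i)"
  shows "bern_repr n k (\<lambda>x. \<Sum>i\<in>I. f i x) (\<lambda>\<beta>. \<Sum>i\<in>I. c i \<beta>)"
  using assms
proof (induction I rule: finite_induct)
  case empty thus ?case using bern_repr_zero by simp
next
  case (insert a I)
  thus ?case using bern_repr_add[of n k "f a" "c a" "\<lambda>x. \<Sum>i\<in>I. f i x" "\<lambda>\<beta>. \<Sum>i\<in>I. c i \<beta>"] by simp
qed

lemma bern_repr_diff_scale:
  assumes "bern_repr n k p cp" "bern_repr n k q cq"
  shows "bern_repr n k (\<lambda>x. p x - t * q x) (\<lambda>\<beta>. cp \<beta> - t * cq \<beta>)"
  using bern_repr_add[OF assms(1) bern_repr_scale[OF assms(2), of "- t"]] by simp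

definition elevate :: "nat \<Rightarrow> nat \<Rightarrow> ((nat \<Rightarrow> nat) \<Rightarrow> real) \<Rightarrow> (nat \<Rightarrow> nat) \<Rightarrow> real" where
  "elevate n k c = (\<lambda>\<beta>. \<Sum>i\<le>n. mult_bary_coef n k i c \<beta>)"

lemma bern_repr_elevate: assumes "bern_repr n k f c" shows "bern_repr n (Suc k) f (elevate n k c)"
proof -
  have "bern_repr n (Suc k) (\<lambda>x. \<Sum>i\<le>n. bary n x i * f x) (\<lambda>\<beta>. \<Sum>i\<le>n. mult_bary_coef n k i c \<beta>)"
    by (rule bern_repr_sum) (auto intro: bern_repr_mult_bary assms)
  moreover have "(\<lambda>x. \<Sum>i\<le>n. bary n x i * f x) = f"
    by (simp add: sum_distrib_right[symmetric] sum_bary)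
  ultimately show ?thesis unfolding elevate_def by simp
qed

lemma bern_repr_exists_mono: assumes "bern_repr n k f c" "k \<le> k'" shows "\<exists>c'. bern_repr n k' f c'"
  using assms(2)
proof (induction k' rule: dec_induct)
  case base thus ?case using assms(1) by blast
next
  case (step m) thus ?case using bern_repr_elevate by blast
qed

lemma bcoef_bern_repr: assumes "bern_repr n l f c" "l \<le> k" shows "bern_repr n k f (bcoef n k f)"
  using bern_repr_exists_mono[OF assms] bcoef_eqI by metis

lemma bcoef_Suc_elevate:
  assumes "bern_repr n l f c" "l \<le> k"
  shows "bcoef n (Suc k) f = elevate n k (bcoef n k f)"
  using bcoef_eqI[OF bern_repr_elevate[OF bcoef_bern_repr[OF assms]]] .

lemma bcoef_diff_scale:
  assumes "bern_repr n l p cp" "bern_repr n l q cq" "l \<le> k"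
  shows "bcoef n k (\<lambda>x. p x - t * q x) = (\<lambda>\<beta>. bcoef n k p \<beta> - t * bcoef n k q \<beta>)"
  by (intro bcoef_eqI bern_repr_diff_scale bcoef_bern_repr[OF assms(1,3)]
      bcoef_bern_repr[OF assms(2,3)])

lemma bern_repr_const: "bern_repr n 0 (\<lambda>x. a) (\<lambda>\<beta>. if \<beta> \<in> mindex n 0 then a else 0)"
  unfolding bern_repr_def mindex_zero bern_def by simp

lemma bern_repr_mult_power:
  assumes "1 \<le> a" "a \<le> n" "bern_repr n k f c"
  shows "\<exists>c'. bern_repr n (k + r) (\<lambda>x. x a ^ r * f x) c'"
proof (induction r)
  case 0 thus ?case using assms(3) by (simp, blast)
next
  case (Suc r)
  then obtain c' where "bern_repr n (k + r) (\<lambda>x. x a ^ r * f x) c'" by blast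
  from bern_repr_mult_bary[OF assms(2) this]
  have "bern_repr n (Suc (k + r)) (\<lambda>x. bary n x a * (x a ^ r * f x))
          (mult_bary_coef n (k + r) a c')" .
  moreover have "bary n x a = x a" for x using assms(1) by (simp add: bary_def)
  ultimately show ?case by (auto simp: mult.assoc)
qed

lemma bern_repr_monomial:
  assumes "finite A" "A \<subseteq> {1..n}"
  shows "\<exists>c. bern_repr n (\<Sum>i\<in>A. \<beta> i) (\<lambda>x. \<Prod>i\<in>A. x i ^ \<beta> i) c"
  using assms
proof (induction A rule: finite_induct)
  case empty thus ?case using bern_repr_const[of n 1] by auto
next
  case (insert a A)
  then obtain c where "bern_repr n (\<Sum>i\<in>A. \<beta> i) (\<lambda>x. \<Prod>i\<in>A. x i ^ \<beta> i) c" by auto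
  from bern_repr_mult_power[OF _ _ this, of a "\<beta> a"] insert.prems
  obtain c' where "bern_repr n ((\<Sum>i\<in>A. \<beta> i) + \<beta> a) (\<lambda>x. x a ^ \<beta> a * (\<Prod>i\<in>A. x i ^ \<beta> i)) c'" by auto
  thus ?case using insert.hyps by (auto simp: add.commute)
qed

lemma is_poly_bern_repr: assumes "is_poly n l P" shows "\<exists>c. bern_repr n l P c"
proof -
  obtain a where a: "\<forall>x. P x = (\<Sum>\<beta>\<in>monoms n l. a \<beta> * (\<Prod>i\<in>{1..n}. x i ^ \<beta> i))"
    using assms unfolding is_poly_def by blast
  have each: "\<forall>\<beta>\<in>monoms n l. \<exists>c. bern_repr n l (\<lambda>x. a \<beta> * (\<Prod>i\<in>{1..n}. x i ^ \<beta> i)) c"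
  proof
    fix \<beta> assume "\<beta> \<in> monoms n l"
    hence le: "(\<Sum>i\<in>{1..n}. \<beta> i) \<le> l" unfolding monoms_def by simp
    obtain c where "bern_repr n (\<Sum>i\<in>{1..n}. \<beta> i) (\<lambda>x. \<Prod>i\<in>{1..n}. x i ^ \<beta> i) c"
      using bern_repr_monomial[of "{1..n}" n \<beta>] by auto
    then obtain c' where "bern_repr n l (\<lambda>x. \<Prod>i\<in>{1..n}. x i ^ \<beta> i) c'"
      using bern_repr_exists_mono le by blast
    thus "\<exists>c. bern_repr n l (\<lambda>x. a \<beta> * (\<Prod>i\<in>{1..n}. x i ^ \<beta> i)) c" using bern_repr_scale by blast
  qed
  then obtain cc where cc: "\<forall>\<beta>\<in>monoms n l. bern_repr n l (\<lambda>x. a \<beta> * (\<Prod>i\<in>{1..n}. x i ^ \<beta> i)) (cc \<beta>)"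
    by metis
  show ?thesis
  proof (cases "finite (monoms n l)")
    case True
    moreover have "(\<lambda>x. \<Sum>\<beta>\<in>monoms n l. a \<beta> * (\<Prod>i\<in>{1..n}. x i ^ \<beta> i)) = P" using a by auto
    ultimately show ?thesis using bern_repr_sum[OF True cc] by auto
  next
    case False
    hence "P = (\<lambda>x. 0)" using a by auto
    thus ?thesis using bern_repr_zero by blast
  qed
qed

lemma bary_nonneg: assumes "x \<in> simplex n" "i \<le> n" shows "bary n x i \<ge> 0"
proof (cases "i = 0")
  case True thus ?thesis using assms(1) by (simp add: simplex_def bary_def)
next
  case False thus ?thesis using assms by (simp add: simplex_def bary_def)
qed

lemma bern_nonneg: assumes "x \<in> simplex n" shows "bern n k \<beta> x \<ge> 0"
  unfolding bern_def using bary_nonneg[OF assms]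
  by (intro mult_nonneg_nonneg divide_nonneg_nonneg prod_nonneg zero_le_power) auto

lemma sum_bern: "(\<Sum>\<beta>\<in>mindex n k. bern n k \<beta> x) = 1"
  using bern_eval_const[of n k 1 "bary n x"] unfolding bern_eval_def bern_eq_bernstein
  by (simp add: sum_bary)

lemma zero_in_simplex: "(\<lambda>_. 0) \<in> simplex n"
  unfolding simplex_def by simp

lemma bern_repr_lower_bound:
  assumes "bern_repr n k f c" "\<forall>\<beta>\<in>mindex n k. c \<beta> \<ge> m" "x \<in> simplex n"
  shows "f x \<ge> m"
proof -
  have "m = (\<Sum>\<beta>\<in>mindex n k. m * bern n k \<beta> x)" by (simp add: sum_distrib_left[symmetric] sum_bern)
  also have "\<dots> \<le> (\<Sum>\<beta>\<in>mindex n k. c \<beta> * bern n k \<beta> x)"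
    using assms(2) bern_nonneg[OF assms(3)] by (intro sum_mono mult_right_mono) auto
  also have "\<dots> = f x" using assms(1) unfolding bern_repr_def by simp
  finally show ?thesis .
qed

lemma bern_repr_le_ratio:
  assumes "bern_repr n k f c" "bern_repr n k g d" "\<forall>\<beta>\<in>mindex n k. d \<beta> > 0"
    "\<forall>\<beta>\<in>mindex n k. c \<beta> / d \<beta> \<le> R"
    "x \<in> simplex n"
  shows "f x \<le> R * g x"
proof -
  have "f x = (\<Sum>\<beta>\<in>mindex n k. c \<beta> * bern n k \<beta> x)" using assms(1) unfolding bern_repr_def by simp
  also have "\<dots> \<le> (\<Sum>\<beta>\<in>mindex n k. (R * d \<beta>) * bern n k \<beta> x)"
  proof (intro sum_mono mult_right_mono)
    fix \<beta> assume b: "\<beta> \<in> mindex n k"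
    show "c \<beta> \<le> R * d \<beta>" using assms(3,4) b by (simp add: divide_le_eq)
  qed (use bern_nonneg[OF assms(5)] in auto)
  also have "\<dots> = R * g x" using assms(2) unfolding bern_repr_def
    by (simp add: sum_distrib_left mult.assoc)
  finally show ?thesis .
qed

lemma elevate_lower_bound:
  assumes "\<forall>\<beta>\<in>mindex n k. c \<beta> \<ge> m"
  shows "\<forall>\<beta>\<in>mindex n (Suc k). elevate n k c \<beta> \<ge> m"
proof
  fix \<beta> assume b: "\<beta> \<in> mindex n (Suc k)"
  have "m = (\<Sum>i\<le>n. real (\<beta> i) / real (Suc k) * m)"
    using sum_mindex_real[OF b]
    by (simp add: sum_distrib_right[symmetric] sum_divide_distrib[symmetric])
  also have "\<dots> \<le> (\<Sum>i\<le>n. real (\<beta> i) / real (Suc k) * c (dec_at \<beta> i))"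
  proof (intro sum_mono)
    fix i assume i: "i \<in> {..n}"
    show "real (\<beta> i) / real (Suc k) * m \<le> real (\<beta> i) / real (Suc k) * c (dec_at \<beta> i)"
    proof (cases "\<beta> i = 0")
      case False
      hence "dec_at \<beta> i \<in> mindex n k" using dec_at_mindex[OF b] i by simp
      thus ?thesis using assms by (intro mult_left_mono) auto
    qed simp
  qed
  also have "\<dots> = elevate n k c \<beta>" unfolding elevate_def mult_bary_coef_def using b by simp
  finally show "elevate n k c \<beta> \<ge> m" .
qed

lemma bcoef_ge_Min:
  assumes q: "bern_repr n l q c" and "l \<le> j"
  shows "\<forall>\<beta>\<in>mindex n j. Min (bcoef n l q ` mindex n l) \<le> bcoef n j q \<beta>"
  using \<open>l \<le> j\<close>
proof (induction j rule: dec_induct)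
  case base thus ?case by simp
next
  case (step j)
  show ?case
    using step.IH unfolding bcoef_Suc_elevate[OF q step.hyps(1)] by (rule elevate_lower_bound)
qed

lemma Min_bcoef_pos:
  assumes "\<forall>\<beta>\<in>mindex n l. bcoef n l q \<beta> > 0"
  shows "Min (bcoef n l q ` mindex n l) > 0"
  using assms vertex_mindex[of 0 n l] by (subst Min_gr_iff) auto

lemma bern_repr_pos:
  assumes q: "bern_repr n l q c" and pos: "\<forall>\<beta>\<in>mindex n l. bcoef n l q \<beta> > 0" and x: "x \<in> simplex n"
  shows "q x > 0"
  using bern_repr_lower_bound[OF bcoef_bern_repr[OF q order_refl] bcoef_ge_Min[OF q order_refl] x]
    Min_bcoef_pos[OF pos] by simp

lemma ratio_le_zeta:
  assumes p: "bern_repr n l p cp" and q: "bern_repr n l q cq"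
    and pos: "\<forall>\<beta>\<in>mindex n l. bcoef n l q \<beta> > 0" and x: "x \<in> simplex n"
  shows "p x / q x \<le> zeta n l p q"
proof -
  define R where "R = bcoef_rat n l p q ` mindex n l"
  have "finite R" "R \<noteq> {}" unfolding R_def using vertex_mindex[of 0 n l] by auto
  hence "\<forall>\<beta>\<in>mindex n l. bcoef n l p \<beta> / bcoef n l q \<beta> \<le> Max R"
    unfolding R_def bcoef_rat_def by auto
  hence "p x \<le> Max R * q x"
    using bcoef_bern_repr[OF p order_refl] bcoef_bern_repr[OF q order_refl] pos x
    by (intro bern_repr_le_ratio) auto
  hence "p x / q x \<le> Max R" using bern_repr_pos[OF q pos x] by (simp add: divide_le_eq)
  thus ?thesis unfolding zeta_def R_def by simp
qed

section \<open>Second differences\<close>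

definition second_diff :: "nat \<Rightarrow> (nat \<Rightarrow> nat) \<Rightarrow> ((nat \<Rightarrow> nat) \<Rightarrow> real) \<Rightarrow> (nat \<Rightarrow> real) \<Rightarrow> real" where
  "second_diff n \<gamma> h d = (\<Sum>i\<le>n. \<Sum>j\<le>n. d i * d j * h (madd3 \<gamma> i j))"

lemma second_diff_sum:
  "finite A \<Longrightarrow> second_diff n \<gamma> (\<lambda>\<beta>. \<Sum>a\<in>A. F a \<beta>) d = (\<Sum>a\<in>A. second_diff n \<gamma> (F a) d)"
  unfolding second_diff_def
  by (induction A rule: finite_induct) (simp_all add: distrib_left sum.distrib)

lemma second_diff_scale: "second_diff n \<gamma> (\<lambda>\<beta>. a * h \<beta>) d = a * second_diff n \<gamma> h d"
  unfolding second_diff_def by (simp add: sum_distrib_left algebra_simps)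

lemma second_diff_diff:
  "second_diff n \<gamma> (\<lambda>\<beta>. h1 \<beta> - h2 \<beta>) d = second_diff n \<gamma> h1 d - second_diff n \<gamma> h2 d"
  unfolding second_diff_def by (simp add: right_diff_distrib sum_subtractf)

lemma second_diff_zero: "second_diff n \<gamma> (\<lambda>\<beta>. 0) d = 0"
  unfolding second_diff_def by simp

lemma second_diff_outside_degree:
  assumes "\<forall>\<beta>. \<beta> \<notin> mindex n k \<longrightarrow> h \<beta> = 0" "\<gamma> \<in> mindex n K" "k \<noteq> Suc (Suc K)"
  shows "second_diff n \<gamma> h d = 0"
proof -
  have "h (madd3 \<gamma> i j) = 0" if "i \<le> n" "j \<le> n" for i j
    using madd3_mindex[OF assms(2) that] assms(1,3) mindex_degree_unique by metis
  thus ?thesis unfolding second_diff_def by simp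
qed

lemma quad_form_drop_separable:
  fixes d :: "nat \<Rightarrow> real"
  assumes "(\<Sum>i\<le>n. d i) = 0"
  shows "(\<Sum>i\<le>n. \<Sum>j\<le>n. d i * d j * (P i + R j + S i j)) = (\<Sum>i\<le>n. \<Sum>j\<le>n. d i * d j * S i j)"
proof -
  have "(\<Sum>i\<le>n. \<Sum>j\<le>n. d i * d j * (P i + R j + S i j))
      = (\<Sum>i\<le>n. d i * P i * (\<Sum>j\<le>n. d j)) + (\<Sum>i\<le>n. d i * (\<Sum>j\<le>n. d j * R j))
        + (\<Sum>i\<le>n. \<Sum>j\<le>n. d i * d j * S i j)"
    by (simp add: distrib_left sum.distrib sum_distrib_left algebra_simps)
  also have "(\<Sum>i\<le>n. d i * (\<Sum>j\<le>n. d j * R j)) = (\<Sum>i\<le>n. d i) * (\<Sum>j\<le>n. d j * R j)"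
    by (simp add: sum_distrib_right)
  finally show ?thesis using assms by simp
qed

lemma sum_swap3: "(\<Sum>i\<in>A. \<Sum>j\<in>B. \<Sum>m\<in>C. F i j m) = (\<Sum>m\<in>C. \<Sum>i\<in>A. \<Sum>j\<in>B. F i j m)"
proof -
  have "(\<Sum>i\<in>A. \<Sum>j\<in>B. \<Sum>m\<in>C. F i j m) = (\<Sum>i\<in>A. \<Sum>m\<in>C. \<Sum>j\<in>B. F i j m)"
    by (rule sum.cong[OF refl], rule sum.swap)
  also have "\<dots> = (\<Sum>m\<in>C. \<Sum>i\<in>A. \<Sum>j\<in>B. F i j m)" by (rule sum.swap)
  finally show ?thesis .
qed

text \<open>Degree elevation of c, read at \<gamma> + e_i + e_j: the two terms that depend on only one of
  i, j are annihilated by directions d with zero sum.\<close>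

lemma elevate_madd3:
  assumes \<gamma>: "\<gamma> \<in> mindex n K" and ij: "i \<le> n" "j \<le> n"
  defines "k \<equiv> Suc (Suc K)"
  shows "elevate n (Suc K) c (madd3 \<gamma> i j)
       = c (inc_at \<gamma> i) / real k + c (inc_at \<gamma> j) / real k
         + (\<Sum>m\<le>n. real (\<gamma> m) / real k * c (madd3 (dec_at \<gamma> m) i j))"
proof -
  have "madd3 \<gamma> i j \<in> mindex n (Suc (Suc K))" using madd3_mindex \<gamma> ij by blast
  hence "elevate n (Suc K) c (madd3 \<gamma> i j)
      = (\<Sum>m\<le>n. real (madd3 \<gamma> i j m) / real k * c (dec_at (madd3 \<gamma> i j) m))"
    unfolding elevate_def mult_bary_coef_def k_def by simp
  also have "\<dots> = (\<Sum>m\<le>n. real (\<gamma> m) / real k * c (madd3 (dec_at \<gamma> m) i j)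
                  + (if m = j then c (inc_at \<gamma> i) / real k else 0)
                  + (if m = i then c (inc_at \<gamma> j) / real k else 0))"
  proof (intro sum.cong refl)
    fix m
    have "real (\<gamma> m) * c (dec_at (madd3 \<gamma> i j) m) = real (\<gamma> m) * c (madd3 (dec_at \<gamma> m) i j)"
      by (cases "\<gamma> m = 0") (auto simp: dec_at_def madd3_def uvec_def intro!: arg_cong[where f=c])
    moreover have "dec_at (madd3 \<gamma> i j) i = inc_at \<gamma> j" "dec_at (madd3 \<gamma> i j) j = inc_at \<gamma> i"
      by (auto simp: dec_at_def madd3_def inc_at_def uvec_def)
    ultimately show "real (madd3 \<gamma> i j m) / real k * c (dec_at (madd3 \<gamma> i j) m)
        = real (\<gamma> m) / real k * c (madd3 (dec_at \<gamma> m) i j)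
          + (if m = j then c (inc_at \<gamma> i) / real k else 0)
          + (if m = i then c (inc_at \<gamma> j) / real k else 0)"
      by (auto simp: madd3_def uvec_def add_divide_distrib distrib_right)
  qed
  finally show ?thesis using ij by (simp add: sum.distrib)
qed

lemma second_diff_elevate:
  assumes \<gamma>: "\<gamma> \<in> mindex n K" and d: "(\<Sum>i\<le>n. d i) = 0"
  shows "second_diff n \<gamma> (elevate n (Suc K) c) d
       = (\<Sum>m\<le>n. real (\<gamma> m) / real (Suc (Suc K)) * second_diff n (dec_at \<gamma> m) c d)"
proof -
  define k where "k = Suc (Suc K)"
  have "second_diff n \<gamma> (elevate n (Suc K) c) d = (\<Sum>i\<le>n. \<Sum>j\<le>n. d i * d j *
      (c (inc_at \<gamma> i) / real k + c (inc_at \<gamma> j) / real k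
       + (\<Sum>m\<le>n. real (\<gamma> m) / real k * c (madd3 (dec_at \<gamma> m) i j))))"
    unfolding second_diff_def k_def by (intro sum.cong refl) (simp add: elevate_madd3[OF \<gamma>])
  also have "\<dots> = (\<Sum>i\<le>n. \<Sum>j\<le>n. \<Sum>m\<le>n. d i * d j * (real (\<gamma> m) / real k * c (madd3 (dec_at \<gamma> m) i j)))"
    unfolding quad_form_drop_separable[OF d] by (simp only: sum_distrib_left)
  also have "\<dots> = (\<Sum>m\<le>n. \<Sum>i\<le>n. \<Sum>j\<le>n. d i * d j * (real (\<gamma> m) / real k * c (madd3 (dec_at \<gamma> m) i j)))"
    by (rule sum_swap3)
  also have "\<dots> = (\<Sum>m\<le>n. real (\<gamma> m) / real k * second_diff n (dec_at \<gamma> m) c d)"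
    unfolding second_diff_def sum_distrib_left by (intro sum.cong refl) (simp only: mult_ac)
  finally show ?thesis unfolding k_def .
qed

definition cyc_next :: "nat \<Rightarrow> nat \<Rightarrow> nat" where
  "cyc_next n m = (if m < n then Suc m else 0)"

lemma prv_le_n: "a \<le> n \<Longrightarrow> prv n a \<le> n" unfolding prv_def by auto

lemma cyc_next_le: "a \<le> n \<Longrightarrow> cyc_next n a \<le> n" unfolding cyc_next_def by auto

lemma cyc_next_prv: "a \<le> n \<Longrightarrow> cyc_next n (prv n a) = a" unfolding cyc_next_def prv_def by auto

lemma prv_cyc_next: "a \<le> n \<Longrightarrow> prv n (cyc_next n a) = a" unfolding cyc_next_def prv_def by auto

lemma sum_reindex_prv: "(\<Sum>a\<le>n. F (prv n a)) = (\<Sum>a\<le>n. F a)"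
proof -
  have "bij_betw (prv n) {..n} {..n}"
    by (rule bij_betw_byWitness[where f'="cyc_next n"])
      (auto simp: cyc_next_prv prv_cyc_next prv_le_n cyc_next_le)
  thus ?thesis by (rule sum.reindex_bij_betw)
qed

lemma sum_by_parts_cyclic:
  fixes x F :: "nat \<Rightarrow> real"
  shows "(\<Sum>a\<le>n. (x a - x (cyc_next n a)) * F a) = (\<Sum>a\<le>n. x a * (F a - F (prv n a)))"
proof -
  have "(\<Sum>a\<le>n. x (cyc_next n a) * F a) = (\<Sum>a\<le>n. x (cyc_next n (prv n a)) * F (prv n a))"
    by (rule sum_reindex_prv[symmetric])
  also have "\<dots> = (\<Sum>a\<le>n. x a * F (prv n a))" by (intro sum.cong refl) (simp add: cyc_next_prv)
  finally show ?thesis by (simp add: left_diff_distrib right_diff_distrib sum_subtractf)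
qed

lemma partial_sum_cyc_next:
  fixes d :: "nat \<Rightarrow> real"
  assumes "(\<Sum>i\<le>n. d i) = 0" "a \<le> n"
  shows "d a = (\<Sum>m\<in>{0..<cyc_next n a}. d m) - (\<Sum>m\<in>{0..<a}. d m)"
proof (cases "a < n")
  case False
  hence "a = n" using assms(2) by simp
  moreover have "(\<Sum>m\<in>{0..<n}. d m) + d n = 0"
    using assms(1) by (simp add: atLeast0LessThan flip: lessThan_Suc_atMost)
  ultimately show ?thesis unfolding cyc_next_def by simp
qed (simp add: cyc_next_def)

lemma sum_symmetric_pairs:
  fixes S :: "nat \<Rightarrow> nat \<Rightarrow> real"
  assumes sym: "\<And>a b. S a b = S b a" and diag: "\<And>a. S a a = 0"
  shows "(\<Sum>a\<le>n. \<Sum>b\<le>n. S a b) = 2 * (\<Sum>a\<le>n. \<Sum>b\<le>n. if a < b then S a b else 0)"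
proof -
  have sp: "S a b = (if a < b then S a b else 0) + (if b < a then S a b else 0)" for a b
    using diag[of a] by (cases a b rule: linorder_cases) auto
  have "(\<Sum>a\<le>n. \<Sum>b\<le>n. if b < a then S a b else 0) = (\<Sum>b\<le>n. \<Sum>a\<le>n. if b < a then S a b else 0)"
    by (rule sum.swap)
  also have "\<dots> = (\<Sum>a\<le>n. \<Sum>b\<le>n. if a < b then S a b else 0)"
    by (intro sum.cong refl) (metis sym)
  finally have e: "(\<Sum>a\<le>n. \<Sum>b\<le>n. if b < a then S a b else 0)
                     = (\<Sum>a\<le>n. \<Sum>b\<le>n. if a < b then S a b else 0)" .
  have "(\<Sum>a\<le>n. \<Sum>b\<le>n. S a b)
      = (\<Sum>a\<le>n. \<Sum>b\<le>n. if a < b then S a b else 0) + (\<Sum>a\<le>n. \<Sum>b\<le>n. if b < a then S a b else 0)"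
    by (subst sp) (simp add: sum.distrib)
  thus ?thesis using e by simp
qed

lemma quad_form_zero_row_sums:
  fixes U :: "nat \<Rightarrow> nat \<Rightarrow> real"
  assumes sym: "\<And>a c. U a c = U c a" and row: "\<And>a. (\<Sum>c\<le>n. U a c) = 0"
  shows "(\<Sum>a\<le>n. \<Sum>c\<le>n. x a * x c * U a c)
       = - (\<Sum>a\<le>n. \<Sum>c\<le>n. if a < c then U a c * (x a - x c)^2 else 0)"
proof -
  have col: "(\<Sum>a\<le>n. U a c) = 0" for c using row[of c] sym by simp
  have "(\<Sum>a\<le>n. \<Sum>c\<le>n. U a c * (x a - x c)^2)
      = (\<Sum>a\<le>n. x a ^ 2 * (\<Sum>c\<le>n. U a c)) + (\<Sum>a\<le>n. \<Sum>c\<le>n. U a c * x c ^ 2)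
        - 2 * (\<Sum>a\<le>n. \<Sum>c\<le>n. x a * x c * U a c)"
    by (simp add: power2_diff algebra_simps sum.distrib sum_subtractf sum_distrib_left
      sum_distrib_right)
  also have "(\<Sum>a\<le>n. \<Sum>c\<le>n. U a c * x c ^ 2) = (\<Sum>c\<le>n. x c ^ 2 * (\<Sum>a\<le>n. U a c))"
    by (subst sum.swap) (simp add: sum_distrib_left mult.commute)
  finally have "(\<Sum>a\<le>n. \<Sum>c\<le>n. x a * x c * U a c) = - (1/2) * (\<Sum>a\<le>n. \<Sum>c\<le>n. U a c * (x a - x c)^2)"
    using row col by simp
  also have "(\<Sum>a\<le>n. \<Sum>c\<le>n. U a c * (x a - x c)^2)
      = 2 * (\<Sum>a\<le>n. \<Sum>c\<le>n. if a < c then U a c * (x a - x c)^2 else 0)"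
    by (rule sum_symmetric_pairs) (simp_all add: sym power2_commute)
  finally show ?thesis by simp
qed

definition hess_entry :: "nat \<Rightarrow> (nat \<Rightarrow> nat) \<Rightarrow> ((nat \<Rightarrow> nat) \<Rightarrow> real) \<Rightarrow> nat \<Rightarrow> nat \<Rightarrow> real" where
  "hess_entry n \<nu> b i j = b (madd3 \<nu> i (prv n j)) + b (madd3 \<nu> (prv n i) j)
     - b (madd3 \<nu> (prv n i) (prv n j)) - b (madd3 \<nu> i j)"

definition interval_sq_sum :: "nat \<Rightarrow> (nat \<Rightarrow> real) \<Rightarrow> real" where
  "interval_sq_sum n d = (\<Sum>a\<le>n. \<Sum>b\<le>n. if a < b then (\<Sum>m\<in>{a..<b}. d m)^2 else 0)"

lemma interval_sq_sum_nonneg: "interval_sq_sum n d \<ge> 0"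
  unfolding interval_sq_sum_def by (intro sum_nonneg) auto

text \<open>Summation by parts with x a = - (d 0 + ... + d (a - 1)) turns the second difference form into
  a combination of the mixed differences that enter hess_norm.\<close>

lemma second_diff_eq_hess_entries:
  fixes d :: "nat \<Rightarrow> real"
  assumes d: "(\<Sum>i\<le>n. d i) = 0"
  shows "second_diff n \<nu> b d
       = (\<Sum>a\<le>n. \<Sum>c\<le>n. if a < c then hess_entry n \<nu> b a c * (\<Sum>m\<in>{a..<c}. d m)^2 else 0)"
proof -
  define B where "B a c = b (madd3 \<nu> a c)" for a c
  have Bs: "B a c = B c a" for a c unfolding B_def using madd3_comm by metis
  define x where "x a = - (\<Sum>m\<in>{0..<a}. d m)" for a
  have dx: "d a = x a - x (cyc_next n a)" if "a \<le> n" for a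
    unfolding x_def using partial_sum_cyc_next[OF d that] by simp
  define U where "U a c = B a c - B (prv n a) c - B a (prv n c) + B (prv n a) (prv n c)" for a c
  have row: "(\<Sum>c\<le>n. U a c) = 0" for a
  proof -
    have "(\<Sum>c\<le>n. U a c) = (\<Sum>c\<le>n. B a c - B (prv n a) c)
            - (\<Sum>c\<le>n. B a (prv n c) - B (prv n a) (prv n c))"
      unfolding U_def by (simp add: sum_subtractf[symmetric] algebra_simps)
    also have "(\<Sum>c\<le>n. B a (prv n c) - B (prv n a) (prv n c)) = (\<Sum>c\<le>n. B a c - B (prv n a) c)"
      by (rule sum_reindex_prv)
    finally show ?thesis by simp
  qed
  have "second_diff n \<nu> b d = (\<Sum>a\<le>n. (x a - x (cyc_next n a)) * (\<Sum>c\<le>n. d c * B a c))"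
    unfolding second_diff_def B_def by (simp add: dx sum_distrib_left mult.assoc)
  also have "\<dots> = (\<Sum>a\<le>n. x a * (\<Sum>c\<le>n. (x c - x (cyc_next n c)) * (B a c - B (prv n a) c)))"
    by (subst sum_by_parts_cyclic) (simp add: dx sum_subtractf right_diff_distrib)
  also have "\<dots> = (\<Sum>a\<le>n. \<Sum>c\<le>n. x a * x c * U a c)"
    by (subst sum_by_parts_cyclic) (simp add: U_def sum_distrib_left algebra_simps)
  also have "\<dots> = - (\<Sum>a\<le>n. \<Sum>c\<le>n. if a < c then U a c * (x a - x c)^2 else 0)"
    by (rule quad_form_zero_row_sums[OF _ row]) (use Bs in \<open>simp add: U_def\<close>)
  also have "\<dots> = (\<Sum>a\<le>n. \<Sum>c\<le>n. if a < c then hess_entry n \<nu> b a c * (\<Sum>m\<in>{a..<c}. d m)^2 else 0)"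
  proof -
    have "x a - x c = (\<Sum>m\<in>{a..<c}. d m)" if "a < c" for a c
      unfolding x_def using sum_diff_nat_ivl[of 0 a c d] that by simp
    moreover have "hess_entry n \<nu> b a c = - U a c" for a c
      unfolding hess_entry_def U_def B_def by simp
    ultimately show ?thesis
      by (simp add: sum_negf[symmetric] if_distrib[where f="\<lambda>t. - t"] cong: if_cong)
  qed
  finally show ?thesis .
qed

lemma second_diff_le_hess_bound:
  assumes d: "(\<Sum>i\<le>n. d i) = 0" and M: "\<forall>i j. i < j \<longrightarrow> j \<le> n \<longrightarrow> hess_entry n \<nu> b i j \<le> M"
  shows "second_diff n \<nu> b d \<le> M * interval_sq_sum n d"
proof -
  have "second_diff n \<nu> b d
      = (\<Sum>a\<le>n. \<Sum>c\<le>n. if a < c then hess_entry n \<nu> b a c * (\<Sum>m\<in>{a..<c}. d m)^2 else 0)"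
    by (rule second_diff_eq_hess_entries[OF d])
  also have "\<dots> \<le> (\<Sum>a\<le>n. \<Sum>c\<le>n. if a < c then M * (\<Sum>m\<in>{a..<c}. d m)^2 else 0)"
    using M by (intro sum_mono) (auto intro: mult_right_mono)
  also have "\<dots> = M * interval_sq_sum n d"
    unfolding interval_sq_sum_def
    by (simp add: sum_distrib_left if_distrib[where f="\<lambda>t. M * t"] cong: if_cong)
  finally show ?thesis .
qed

lemma second_diff_elevate_le:
  assumes \<gamma>: "\<gamma> \<in> mindex n K" and d: "(\<Sum>i\<le>n. d i) = 0"
    and B: "\<forall>\<gamma>'\<in>mindex n (K - 1). second_diff n \<gamma>' c d \<le> B"
  shows "second_diff n \<gamma> (elevate n (Suc K) c) d \<le> real K / real (Suc (Suc K)) * B"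
proof -
  have "second_diff n \<gamma> (elevate n (Suc K) c) d
      = (\<Sum>m\<le>n. real (\<gamma> m) / real (Suc (Suc K)) * second_diff n (dec_at \<gamma> m) c d)"
    by (rule second_diff_elevate[OF \<gamma> d])
  also have "\<dots> \<le> (\<Sum>m\<le>n. real (\<gamma> m) / real (Suc (Suc K)) * B)"
  proof (intro sum_mono)
    fix m assume m: "m \<in> {..n}"
    show "real (\<gamma> m) / real (Suc (Suc K)) * second_diff n (dec_at \<gamma> m) c d
        \<le> real (\<gamma> m) / real (Suc (Suc K)) * B"
    proof (cases "\<gamma> m = 0")
      case False
      hence "1 \<le> \<gamma> m" "\<gamma> m \<le> K" using mindex_le_degree[OF \<gamma>] m by auto
      hence "\<gamma> \<in> mindex n (Suc (K - 1))" using \<gamma> by simp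
      hence "dec_at \<gamma> m \<in> mindex n (K - 1)" using dec_at_mindex m \<open>1 \<le> \<gamma> m\<close> by blast
      thus ?thesis using B by (intro mult_left_mono) auto
    qed simp
  qed
  also have "\<dots> = real K / real (Suc (Suc K)) * B"
    using sum_mindex_real[OF \<gamma>]
    by (simp add: sum_distrib_right[symmetric] sum_divide_distrib[symmetric])
  finally show ?thesis .
qed

lemma second_diff_bcoef_eq_0:
  assumes g: "bern_repr n l g c" and "l \<le> k" and \<gamma>: "\<gamma> \<in> mindex n K" and "k \<noteq> Suc (Suc K)"
  shows "second_diff n \<gamma> (bcoef n k g) d = 0"
  using bcoef_bern_repr[OF assms(1,2)] assms(4)
  by (intro second_diff_outside_degree[OF _ \<gamma>]) (auto simp: bern_repr_def)

lemma elevation_factor_le: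
  assumes "k = Suc K"
  shows "real K / real (Suc k) * (real (l*(l-1)) / real (k*(k-1)))
       \<le> real (l*(l-1)) / real (Suc k * (Suc k - 1))"
proof (cases "K = 0")
  case False
  have "real (k*(k-1)) = real K * (real K + 1)"
    and "real (Suc k * (Suc k - 1)) = (real K + 1) * (real K + 2)"
    using assms by (simp_all add: algebra_simps)
  thus ?thesis using False assms by (simp add: divide_simps, simp add: algebra_simps)
qed (use assms in simp)

lemma second_diff_bcoef_le:
  fixes d :: "nat \<Rightarrow> real"
  assumes g: "bern_repr n l g c" and M: "M \<ge> 0"
    and entries: "\<forall>\<nu>\<in>mindex n (l - 2). \<forall>i j. i < j \<longrightarrow> j \<le> n \<longrightarrow> \<bar>hess_entry n \<nu> (bcoef n l g) i j\<bar> \<le> M"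
    and d: "(\<Sum>i\<le>n. d i) = 0" and "l \<le> k"
  shows "\<forall>\<gamma>\<in>mindex n (k - 2).
           second_diff n \<gamma> (bcoef n k g) d
             \<le> real (l*(l-1)) / real (k*(k-1)) * M * interval_sq_sum n d"
  using \<open>l \<le> k\<close>
proof (induction k rule: dec_induct)
  case base
  have "second_diff n \<gamma> (bcoef n l g) d \<le> M * interval_sq_sum n d" if "\<gamma> \<in> mindex n (l - 2)" for \<gamma>
  proof (cases "2 \<le> l")
    case True
    thus ?thesis using entries that by (intro second_diff_le_hess_bound[OF d]) fastforce
  next
    case False
    thus ?thesis using second_diff_bcoef_eq_0[OF g order_refl that] M interval_sq_sum_nonneg by simp
  qed
  thus ?case by (cases "2 \<le> l") (simp_all add: second_diff_bcoef_eq_0[OF g order_refl])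
next
  case (step k)
  let ?B = "\<lambda>k. real (l*(l-1)) / real (k*(k-1)) * M * interval_sq_sum n d"
  show ?case
  proof
    fix \<gamma> assume \<gamma>: "\<gamma> \<in> mindex n (Suc k - 2)"
    show "second_diff n \<gamma> (bcoef n (Suc k) g) d \<le> ?B (Suc k)"
    proof (cases k)
      case 0
      thus ?thesis using second_diff_bcoef_eq_0[OF g _ \<gamma>] step.hyps M interval_sq_sum_nonneg by simp
    next
      case (Suc K)
      have "\<forall>\<gamma>'\<in>mindex n (K - 1). second_diff n \<gamma>' (bcoef n k g) d \<le> ?B k" using step.IH Suc by simp
      moreover have "\<gamma> \<in> mindex n K" using \<gamma> Suc by simp
      ultimately have "second_diff n \<gamma> (bcoef n (Suc k) g) d \<le> real K / real (Suc k) * ?B k"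
        using second_diff_elevate_le[OF _ d, of \<gamma> K "bcoef n k g" "?B k"]
        unfolding bcoef_Suc_elevate[OF g step.hyps(1)] by (simp only: Suc)
      also have "\<dots> = real K / real (Suc k) * (real (l*(l-1)) / real (k*(k-1)))
                   * (M * interval_sq_sum n d)"
        by (simp only: mult_ac)
      also have "\<dots> \<le> ?B (Suc k)"
        using mult_right_mono[OF elevation_factor_le[OF Suc, of l], of "M * interval_sq_sum n d"]
          M interval_sq_sum_nonneg by (simp add: mult_ac)
      finally show ?thesis .
    qed
  qed
qed

lemma finite_hess_entries:
  "finite {\<bar>hess_entry n \<gamma> b i j\<bar> | \<gamma> i j. \<gamma> \<in> mindex n K \<and> i < j \<and> j \<le> n}"
proof -
  have "{\<bar>hess_entry n \<gamma> b i j\<bar> | \<gamma> i j. \<gamma> \<in> mindex n K \<and> i < j \<and> j \<le> n}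
      \<subseteq> (\<lambda>(\<gamma>, i, j). \<bar>hess_entry n \<gamma> b i j\<bar>) ` (mindex n K \<times> {..n} \<times> {..n})"
    by (auto simp: image_iff) (metis atMost_iff less_imp_le_nat order.trans)
  thus ?thesis by (rule finite_subset) auto
qed

lemma hess_entry_le_hess_norm:
  assumes "\<gamma> \<in> mindex n (l - 2)" "i < j" "j \<le> n"
  shows "\<bar>hess_entry n \<gamma> (bcoef n l P) i j\<bar> \<le> hess_norm n l P"
proof -
  have "hess_norm n l P
      = Max {\<bar>hess_entry n \<gamma> (bcoef n l P) i j\<bar> | \<gamma> i j. \<gamma> \<in> mindex n (l - 2) \<and> i < j \<and> j \<le> n}"
    unfolding hess_norm_def hess_entry_def ..
  thus ?thesis using assms by (auto intro: Max_ge[OF finite_hess_entries])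
qed

lemma hess_norm_nonneg:
  assumes "1 \<le> n"
  shows "hess_norm n l P \<ge> 0"
  using hess_entry_le_hess_norm[OF vertex_mindex[of 0 n "l - 2"], of 0 1 P] assms by linarith

section \<open>Jensen's inequality for concave coefficients\<close>

lemma casteljau_twice_second_diff: "casteljau n d (casteljau n d h) \<gamma> = second_diff n \<gamma> h d"
  unfolding casteljau_def second_diff_def madd3_eq_inc_at by (simp add: sum_distrib_left mult.assoc)

definition concave_coef :: "nat \<Rightarrow> nat \<Rightarrow> ((nat \<Rightarrow> nat) \<Rightarrow> real) \<Rightarrow> bool" where
  "concave_coef n k h \<longleftrightarrow>
     (2 \<le> k \<longrightarrow> (\<forall>\<gamma>\<in>mindex n (k - 2). \<forall>d. (\<Sum>i\<le>n. d i) = 0 \<longrightarrow> second_diff n \<gamma> h d \<le> 0))"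

lemma concave_casteljau:
  assumes T: "\<forall>i\<le>n. T i \<ge> 0" and h: "concave_coef n (Suc k) h"
  shows "concave_coef n k (casteljau n T h)"
  unfolding concave_coef_def
proof (intro impI ballI allI)
  fix \<gamma> d assume k: "2 \<le> k" and \<gamma>: "\<gamma> \<in> mindex n (k - 2)" and d: "(\<Sum>i\<le>n. d i) = (0::real)"
  have "second_diff n \<gamma> (casteljau n T h) d
      = (\<Sum>i\<le>n. \<Sum>j\<le>n. \<Sum>m\<le>n. d i * d j * (T m * h (madd3 (inc_at \<gamma> m) i j)))"
    unfolding second_diff_def casteljau_def by (simp add: sum_distrib_left inc_at_madd3)
  also have "\<dots> = (\<Sum>m\<le>n. \<Sum>i\<le>n. \<Sum>j\<le>n. d i * d j * (T m * h (madd3 (inc_at \<gamma> m) i j)))"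
    by (rule sum_swap3)
  also have "\<dots> = (\<Sum>m\<le>n. T m * second_diff n (inc_at \<gamma> m) h d)"
    unfolding second_diff_def sum_distrib_left by (intro sum.cong refl) (simp only: mult_ac)
  also have "\<dots> \<le> 0"
  proof (intro sum_nonpos mult_nonneg_nonpos)
    fix m assume "m \<in> {..n}"
    moreover have "Suc (k - 2) = Suc k - 2" using k by simp
    ultimately show "second_diff n (inc_at \<gamma> m) h d \<le> 0"
      using h k d inc_at_mindex[OF \<gamma>] unfolding concave_coef_def by auto
  qed (use T in auto)
  finally show "second_diff n \<gamma> (casteljau n T h) d \<le> 0" .
qed

lemma binomial_weights_sum: "(\<Sum>r\<le>K. real (K choose r) * (1 - t) ^ (K - r) * t ^ r) = 1"
  using binomial_ring[of t "1 - t" K] by (simp add: mult_ac)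

lemma binomial_weights_mean:
  "(\<Sum>r\<le>K. real (K choose r) * (1 - t) ^ (K - r) * t ^ r * real r) = real K * t"
proof (cases K)
  case 0 thus ?thesis by simp
next
  case (Suc K')
  have "(\<Sum>r\<le>Suc K'. real (Suc K' choose r) * (1 - t) ^ (Suc K' - r) * t ^ r * real r)
      = (\<Sum>r\<le>K'. real (Suc K' choose Suc r) * real (Suc r) * (t * ((1 - t) ^ (K' - r) * t ^ r)))"
    by (subst sum.atMost_Suc_shift) (simp add: mult_ac)
  also have "\<dots> = (\<Sum>r\<le>K'. real (Suc K') * t * (real (K' choose r) * (1 - t) ^ (K' - r) * t ^ r))"
  proof -
    have "real (Suc K' choose Suc r) * real (Suc r) = real (Suc K') * real (K' choose r)" for r
      using Suc_times_binomial[of r K'] by (metis mult.commute of_nat_mult)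
    thus ?thesis by (simp only: mult_ac)
  qed
  also have "\<dots> = real (Suc K') * t" by (simp add: sum_distrib_left[symmetric] binomial_weights_sum)
  finally show ?thesis using Suc by simp
qed

lemma concave_seq_le_tangent:
  fixes \<eta> :: "nat \<Rightarrow> real"
  assumes conc: "\<And>p. Suc (Suc p) \<le> K \<Longrightarrow> \<eta> (Suc (Suc p)) - 2 * \<eta> (Suc p) + \<eta> p \<le> 0"
    and "r \<le> K"
  shows "\<eta> r \<le> \<eta> 0 + real r * (\<eta> 1 - \<eta> 0)"
proof -
  have diff: "\<eta> (Suc r) - \<eta> r \<le> \<eta> 1 - \<eta> 0" if "r < K" for r
    using that
  proof (induction r)
    case (Suc r)
    thus ?case using conc[of r] by simp
  qed simp
  show ?thesis
    using \<open>r \<le> K\<close>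
  proof (induction r)
    case (Suc r)
    thus ?case using diff[of r] by (simp add: algebra_simps)
  qed simp
qed

text \<open>Jensen's inequality: the weights form the binomial distribution B(K, 1/K), whose mean is 1.\<close>

lemma binomial_weights_concave_le:
  fixes \<eta> :: "nat \<Rightarrow> real"
  assumes conc: "\<And>p. Suc (Suc p) \<le> K \<Longrightarrow> \<eta> (Suc (Suc p)) - 2 * \<eta> (Suc p) + \<eta> p \<le> 0"
    and K: "K \<ge> 1"
  shows "(\<Sum>r\<le>K. real (K choose r) * (1 - 1 / real K) ^ (K - r) * (1 / real K) ^ r * \<eta> r) \<le> \<eta> 1"
proof -
  define w where "w r = real (K choose r) * (1 - 1 / real K) ^ (K - r) * (1 / real K) ^ r" for r
  define D where "D = \<eta> 1 - \<eta> 0"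
  have "w r \<ge> 0" for r unfolding w_def using K by simp
  hence "(\<Sum>r\<le>K. w r * \<eta> r) \<le> (\<Sum>r\<le>K. w r * (\<eta> 0 + real r * D))"
    using concave_seq_le_tangent[of K \<eta>, OF conc] unfolding D_def
    by (intro sum_mono mult_left_mono) auto
  also have "\<dots> = \<eta> 0 * (\<Sum>r\<le>K. w r) + D * (\<Sum>r\<le>K. w r * real r)"
    by (simp add: algebra_simps sum.distrib sum_distrib_left)
  also have "\<dots> = \<eta> 1"
    unfolding w_def binomial_weights_sum binomial_weights_mean D_def using K by simp
  finally show ?thesis unfolding w_def .
qed

lemma casteljau_iter_mix:
  "casteljau_iter n (\<lambda>i. (1 - t) * a i + t * b i) K h z
     = (\<Sum>r\<le>K. real (K choose r) * (1 - t) ^ (K - r) * t ^ r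
                 * casteljau_iter n a (K - r) (casteljau_iter n b r h) z)"
proof -
  have "casteljau_iter n (\<lambda>i. (1 - t) * a i) (K - r) g
      = (\<lambda>\<gamma>. (1 - t) ^ (K - r) * casteljau_iter n a (K - r) g \<gamma>)" for r g
    by (rule casteljau_iter_scale_weights)
  moreover have "casteljau_iter n (\<lambda>i. t * b i) r h = (\<lambda>\<gamma>. t ^ r * casteljau_iter n b r h \<gamma>)" for r
    by (rule casteljau_iter_scale_weights)
  ultimately show ?thesis
    unfolding casteljau_iter_binomial by (simp only: casteljau_iter_scale) (simp add: mult_ac)
qed

text \<open>The second difference in r of the blossom with K - r arguments a and r arguments b is a
  blossom of the second difference of h in the direction b - a.\<close>

lemma casteljau_blossom_concave:
  fixes a b :: "nat \<Rightarrow> real"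
  assumes a: "\<forall>i\<le>n. a i \<ge> 0" and b: "\<forall>i\<le>n. b i \<ge> 0" and ab: "(\<Sum>i\<le>n. a i) = (\<Sum>i\<le>n. b i)"
    and h: "concave_coef n K h" and p: "Suc (Suc p) \<le> K"
  defines "\<eta> \<equiv> \<lambda>r. casteljau_iter n a (K - r) (casteljau_iter n b r h) (\<lambda>_. 0)"
  shows "\<eta> (Suc (Suc p)) - 2 * \<eta> (Suc p) + \<eta> p \<le> 0"
proof -
  define q where "q = K - Suc (Suc p)"
  have Kq: "K = Suc (Suc (p + q))" using p unfolding q_def by simp
  define \<delta> where "\<delta> i = b i - a i" for i
  define W where "W \<beta> = casteljau n b (casteljau n b h) \<beta> + (-2) * casteljau n a (casteljau n b h) \<beta>
                         + casteljau n a (casteljau n a h) \<beta>" for \<beta>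
  have "casteljau n \<delta> g = (\<lambda>\<gamma>. casteljau n b g \<gamma> + (-1) * casteljau n a g \<gamma>)" for g
    using casteljau_add_weights[of n b "\<lambda>i. (-1) * a i" g] casteljau_scale_weights[of n "-1" a g]
    unfolding \<delta>_def by simp
  hence W: "W \<beta> = second_diff n \<beta> h \<delta>" for \<beta>
    unfolding W_def casteljau_twice_second_diff[symmetric]
    by (simp add: casteljau_add casteljau_diff casteljau_scale casteljau_comm[of n b a]
      algebra_simps)
  have "\<eta> (Suc (Suc p)) = casteljau_iter n a q
            (casteljau_iter n b p (casteljau n b (casteljau n b h))) (\<lambda>_. 0)"
    unfolding \<eta>_def q_def by (simp add: casteljau_iter_Suc')
  moreover have "\<eta> (Suc p) = casteljau_iter n a q
                     (casteljau_iter n b p (casteljau n a (casteljau n b h))) (\<lambda>_. 0)"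
    unfolding \<eta>_def using Kq by (simp add: casteljau_iter_Suc' casteljau_casteljau_iter_comm)
  moreover have "\<eta> p = casteljau_iter n a q
                     (casteljau_iter n b p (casteljau n a (casteljau n a h))) (\<lambda>_. 0)"
    unfolding \<eta>_def using Kq by (simp add: casteljau_iter_Suc' casteljau_casteljau_iter_comm)
  ultimately have "\<eta> (Suc (Suc p)) - 2 * \<eta> (Suc p) + \<eta> p
                     = casteljau_iter n a q (casteljau_iter n b p W) (\<lambda>_. 0)"
    unfolding W_def by (simp add: casteljau_iter_add casteljau_iter_diff casteljau_iter_scale)
  moreover have "\<forall>\<beta>\<in>mindex n (q + p). W \<beta> \<le> 0"
  proof -
    have "(\<Sum>i\<le>n. \<delta> i) = 0" unfolding \<delta>_def using ab by (simp add: sum_subtractf)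
    thus ?thesis using h Kq unfolding W concave_coef_def by (simp add: add.commute)
  qed
  hence "\<forall>\<gamma>\<in>mindex n (0 + q). casteljau_iter n b p W \<gamma> \<le> 0"
    by (simp add: casteljau_iter_nonpos[OF b])
  hence "\<forall>\<gamma>\<in>mindex n 0. casteljau_iter n a q (casteljau_iter n b p W) \<gamma> \<le> 0"
    by (rule casteljau_iter_nonpos[OF a])
  ultimately show ?thesis by (simp add: mindex_zero)
qed

lemma casteljau_iter_mix_le:
  fixes a b :: "nat \<Rightarrow> real"
  assumes a: "\<forall>i\<le>n. a i \<ge> 0" and b: "\<forall>i\<le>n. b i \<ge> 0" and ab: "(\<Sum>i\<le>n. a i) = (\<Sum>i\<le>n. b i)"
    and K: "K \<ge> 1" and h: "concave_coef n K h"
  shows "casteljau_iter n (\<lambda>i. (1 - 1 / real K) * a i + 1 / real K * b i) K h (\<lambda>_. 0)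
       \<le> casteljau_iter n a (K - 1) (casteljau n b h) (\<lambda>_. 0)"
proof -
  have "casteljau_iter n a (K - 1) (casteljau n b h)
          = casteljau_iter n a (K - 1) (casteljau_iter n b 1 h)"
    by (simp add: casteljau_iter_Suc)
  moreover have "(\<Sum>r\<le>K. real (K choose r) * (1 - 1 / real K) ^ (K - r) * (1 / real K) ^ r
                   * casteljau_iter n a (K - r) (casteljau_iter n b r h) (\<lambda>_. 0))
      \<le> casteljau_iter n a (K - 1) (casteljau_iter n b 1 h) (\<lambda>_. 0)"
    using casteljau_blossom_concave[OF a b ab h] by (intro binomial_weights_concave_le K) auto
  ultimately show ?thesis unfolding casteljau_iter_mix by simp
qed

definition grid_point :: "(nat \<Rightarrow> nat) \<Rightarrow> nat \<Rightarrow> nat \<Rightarrow> real" where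
  "grid_point \<alpha> k = (\<lambda>j. real (\<alpha> j) / real k)"

definition unit_weight :: "nat \<Rightarrow> nat \<Rightarrow> real" where
  "unit_weight i = (\<lambda>j. if j = i then 1 else 0)"

lemma casteljau_unit_weight: "i \<le> n \<Longrightarrow> casteljau n (unit_weight i) h \<gamma> = h (inc_at \<gamma> i)"
  unfolding casteljau_def unit_weight_def
  by (simp add: if_distrib[where f="\<lambda>t. t * _"] sum.delta cong: if_cong)

lemma grid_point_inc_at:
  assumes "k \<ge> 1"
  shows "grid_point (inc_at \<alpha> i) (Suc k)
       = (\<lambda>j. (1 - 1 / real (Suc k)) * grid_point \<alpha> k j + 1 / real (Suc k) * unit_weight i j)"
proof
  fix j
  have "(1 - 1 / real (Suc k)) * (real (\<alpha> j) / real k) = real (\<alpha> j) / real (Suc k)"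
    using assms by (simp add: field_simps)
  thus "grid_point (inc_at \<alpha> i) (Suc k) j
      = (1 - 1 / real (Suc k)) * grid_point \<alpha> k j + 1 / real (Suc k) * unit_weight i j"
    unfolding grid_point_def unit_weight_def inc_at_def uvec_def by (auto simp: add_divide_distrib)
qed

lemma grid_point_sum:
  assumes "\<alpha> \<in> mindex n k" "k \<ge> 1"
  shows "(\<Sum>j\<le>n. grid_point \<alpha> k j) = 1"
  unfolding grid_point_def using sum_mindex_real[OF assms(1)] assms(2)
  by (simp add: sum_divide_distrib[symmetric])

text \<open>Peel off one unit vector of \<alpha> at a time; each step is an instance of casteljau_iter_mix_le.\<close>

lemma casteljau_iter_grid_point_le:
  assumes "\<alpha> \<in> mindex n k" "concave_coef n k h"
  shows "casteljau_iter n (grid_point \<alpha> k) k h (\<lambda>_. 0) \<le> h \<alpha>"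
  using assms
proof (induction k arbitrary: \<alpha> h)
  case 0 thus ?case by (simp add: mindex_zero)
next
  case (Suc k)
  obtain i \<alpha>' where i: "i \<le> n" and \<alpha>': "\<alpha>' \<in> mindex n k" and \<alpha>: "\<alpha> = inc_at \<alpha>' i"
    using mindex_Suc_obtain[OF Suc.prems(1)] .
  show ?case
  proof (cases "k = 0")
    case True
    hence "\<alpha>' = (\<lambda>_. 0)" using \<alpha>' by (simp add: mindex_zero)
    thus ?thesis unfolding \<alpha> using True i
      by (simp add: casteljau_iter_Suc casteljau_def grid_point_def inc_at_def uvec_def
          if_distrib[where f="\<lambda>t. real t * _"] sum.delta cong: if_cong)
  next
    case False
    have unit: "\<forall>j\<le>n. unit_weight i j \<ge> 0" unfolding unit_weight_def by simp
    have "(\<Sum>j\<le>n. grid_point \<alpha>' k j) = (\<Sum>j\<le>n. unit_weight i j)"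
      unfolding grid_point_def unit_weight_def using sum_mindex_real[OF \<alpha>'] False i
      by (simp add: sum_divide_distrib[symmetric])
    moreover have "grid_point \<alpha> (Suc k)
        = (\<lambda>j. (1 - 1 / real (Suc k)) * grid_point \<alpha>' k j + 1 / real (Suc k) * unit_weight i j)"
      unfolding \<alpha> using grid_point_inc_at False by simp
    moreover have "\<forall>j\<le>n. grid_point \<alpha>' k j \<ge> 0" by (simp add: grid_point_def)
    ultimately have "casteljau_iter n (grid_point \<alpha> (Suc k)) (Suc k) h (\<lambda>_. 0)
        \<le> casteljau_iter n (grid_point \<alpha>' k) (Suc k - 1) (casteljau n (unit_weight i) h) (\<lambda>_. 0)"
      using casteljau_iter_mix_le[OF _ unit _ _ Suc.prems(2)] by simp
    also have "\<dots> \<le> casteljau n (unit_weight i) h \<alpha>'"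
      using Suc.IH[OF \<alpha>' concave_casteljau[OF unit Suc.prems(2)]] by simp
    also have "\<dots> = h \<alpha>" unfolding \<alpha> using casteljau_unit_weight[OF i] .
    finally show ?thesis .
  qed
qed

lemma bern_eval_grid_point_le:
  assumes "\<alpha> \<in> mindex n k" "concave_coef n k h"
  shows "bern_eval n k h (grid_point \<alpha> k) \<le> h \<alpha>"
  using casteljau_iter_grid_point_le[OF assms] unfolding bern_eval_casteljau_iter .

lemma grid_point_bary:
  assumes a: "\<alpha> \<in> mindex n k" and k: "k \<ge> 1"
  defines "x \<equiv> (\<lambda>i. if i \<in> {1..n} then real (\<alpha> i) / real k else 0)"
  shows "x \<in> simplex n" "bary n x = grid_point \<alpha> k"
proof -
  have s: "(\<Sum>i\<in>{1..n}. x i) = (real k - real (\<alpha> 0)) / real k"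
  proof -
    have "(\<Sum>i\<in>{1..n}. x i) = (\<Sum>i\<in>{1..n}. real (\<alpha> i)) / real k"
      unfolding x_def by (simp add: sum_divide_distrib)
    also have "(\<Sum>i\<in>{1..n}. real (\<alpha> i)) = real k - real (\<alpha> 0)"
      using mindex_sum_split[OF a] by (simp flip: of_nat_sum)
    finally show ?thesis .
  qed
  have a0: "real (\<alpha> 0) \<le> real k" using mindex_sum_split[OF a] by simp
  show "x \<in> simplex n"
    unfolding simplex_def using s a0 k by (auto simp: x_def divide_le_eq)
  show "bary n x = grid_point \<alpha> k"
  proof
    fix i show "bary n x i = grid_point \<alpha> k i"
    proof (cases "i = 0")
      case True thus ?thesis unfolding bary_def grid_point_def using s k by (simp add: field_simps)
    next
      case False
      show ?thesis
      proof (cases "i \<le> n")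
        case True thus ?thesis using False unfolding bary_def grid_point_def x_def by simp
      next
        case f2: False
        hence "\<alpha> i = 0" using a by (simp add: mindex_def)
        thus ?thesis using False f2 unfolding bary_def grid_point_def x_def by simp
      qed
    qed
  qed
qed

section \<open>The quadratic correction\<close>

lemma sum_mult_indicator:
  fixes T :: "nat \<Rightarrow> real"
  assumes "I \<subseteq> {..n}"
  shows "(\<Sum>i\<le>n. T i * (if i \<in> I then 1 else 0)) = (\<Sum>m\<in>I. T m)"
  using assms by (simp add: if_distrib[where f="\<lambda>x. T _ * x"] sum.inter_restrict[symmetric]
      Int_absorb1 cong: if_cong)

lemma second_diff_interval_sq:
  fixes d :: "nat \<Rightarrow> real"
  assumes I: "I \<subseteq> {..n}" and d: "(\<Sum>i\<le>n. d i) = 0"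
  shows "second_diff n \<gamma> (\<lambda>\<beta>. (\<Sum>m\<in>I. real (\<beta> m))^2) d = 2 * (\<Sum>m\<in>I. d m)^2"
proof -
  have fI: "finite I" using I finite_subset by blast
  define Y where "Y = (\<Sum>m\<in>I. real (\<gamma> m))"
  define \<chi> where "\<chi> i = (if i \<in> I then 1 else (0::real))" for i
  have e: "(\<Sum>m\<in>I. real (madd3 \<gamma> i j m)) = Y + \<chi> i + \<chi> j" for i j
    unfolding madd3_def Y_def \<chi>_def uvec_def using fI
    by (simp add: sum.distrib of_nat_add if_distrib[where f=real] sum.delta cong: if_cong)
  have "second_diff n \<gamma> (\<lambda>\<beta>. (\<Sum>m\<in>I. real (\<beta> m))^2) d =
      (\<Sum>i\<le>n. \<Sum>j\<le>n. d i * d j * ((Y^2 + 2*Y*\<chi> i + (\<chi> i)^2) + (2*Y*\<chi> j + (\<chi> j)^2) + 2 * \<chi> i * \<chi> j))"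
    unfolding second_diff_def e by (intro sum.cong refl) (simp add: power2_sum algebra_simps)
  also have "\<dots> = (\<Sum>i\<le>n. \<Sum>j\<le>n. d i * d j * (2 * \<chi> i * \<chi> j))"
    by (rule quad_form_drop_separable[OF d])
  also have "\<dots> = 2 * (\<Sum>i\<le>n. d i * \<chi> i) * (\<Sum>j\<le>n. d j * \<chi> j)"
    by (simp add: sum_distrib_left sum_distrib_right algebra_simps)
  also have "(\<Sum>i\<le>n. d i * \<chi> i) = (\<Sum>m\<in>I. d m)"
    unfolding \<chi>_def by (rule sum_mult_indicator[OF I])
  finally show ?thesis by (simp add: power2_eq_square)
qed

definition interval_sq_coef :: "nat \<Rightarrow> (nat \<Rightarrow> nat) \<Rightarrow> real" where
  "interval_sq_coef n \<beta> = (\<Sum>a\<le>n. \<Sum>b\<le>n. if a < b then (1/2) * (\<Sum>m\<in>{a..<b}. real (\<beta> m))^2 else 0)"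

lemma second_diff_interval_sq_coef:
  assumes d: "(\<Sum>i\<le>n. d i) = 0"
  shows "second_diff n \<gamma> (interval_sq_coef n) d = interval_sq_sum n d"
proof -
  have "second_diff n \<gamma> (interval_sq_coef n) d
      = (\<Sum>a\<le>n. \<Sum>b\<le>n.
           second_diff n \<gamma> (\<lambda>\<beta>. if a < b then (1/2) * (\<Sum>m\<in>{a..<b}. real (\<beta> m))^2 else 0) d)"
    unfolding interval_sq_coef_def by (simp add: second_diff_sum)
  also have "\<dots> = interval_sq_sum n d"
    unfolding interval_sq_sum_def
  proof (intro sum.cong refl)
    fix a b assume b: "b \<in> {..n}"
    show "second_diff n \<gamma> (\<lambda>\<beta>. if a < b then 1/2 * (\<Sum>m\<in>{a..<b}. real (\<beta> m))^2 else 0) d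
        = (if a < b then (\<Sum>m\<in>{a..<b}. d m)^2 else 0)"
    proof (cases "a < b")
      case True
      have "{a..<b} \<subseteq> {..n}" using b by auto
      thus ?thesis
        using True second_diff_interval_sq[OF _ d]
          second_diff_scale[of n \<gamma> "1/2" "\<lambda>\<beta>. (\<Sum>m\<in>{a..<b}. real (\<beta> m))^2" d]
        by simp
    next
      case False thus ?thesis using second_diff_zero by simp
    qed
  qed
  finally show ?thesis .
qed

lemma bern_eval_coordinate:
  assumes T1: "(\<Sum>i\<le>n. T i) = 1" and m: "m \<le> n"
  shows "bern_eval n k (\<lambda>\<beta>. real (\<beta> m)) T = real k * T m"
proof (induction k)
  case 0 thus ?case by (simp add: bern_eval_0)
next
  case (Suc k)
  have "casteljau n T (\<lambda>\<beta>. real (\<beta> m)) = (\<lambda>\<gamma>. real (\<gamma> m) + T m)"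
  proof
    fix \<gamma>
    have "casteljau n T (\<lambda>\<beta>. real (\<beta> m)) \<gamma>
            = (\<Sum>i\<le>n. T i * real (\<gamma> m)) + (\<Sum>i\<le>n. T i * (if i \<in> {m} then 1 else 0))"
      unfolding casteljau_def inc_at_def uvec_def
      by (simp add: distrib_left sum.distrib if_distrib[where f=real] eq_commute cong: if_cong)
    also have "\<dots> = real (\<gamma> m) + T m"
      using T1 m sum_mult_indicator[of "{m}" n T] by (simp add: sum_distrib_right[symmetric])
    finally show "casteljau n T (\<lambda>\<beta>. real (\<beta> m)) \<gamma> = real (\<gamma> m) + T m" .
  qed
  thus ?case using Suc T1 by (simp add: bern_eval_Suc bern_eval_add bern_eval_const algebra_simps)
qed

lemma bern_eval_interval_sum:
  assumes T1: "(\<Sum>i\<le>n. T i) = 1" and I: "I \<subseteq> {..n}"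
  shows "bern_eval n k (\<lambda>\<beta>. \<Sum>m\<in>I. real (\<beta> m)) T = real k * (\<Sum>m\<in>I. T m)"
proof -
  have fI: "finite I" using I finite_subset by blast
  show ?thesis using bern_eval_coordinate[OF T1] I fI
    by (simp add: bern_eval_sum sum_distrib_left subset_eq)
qed

lemma bern_eval_interval_sum_sq:
  assumes T1: "(\<Sum>i\<le>n. T i) = 1" and I: "I \<subseteq> {..n}"
  shows "bern_eval n k (\<lambda>\<beta>. (\<Sum>m\<in>I. real (\<beta> m))^2) T
         = real k * (real k - 1) * (\<Sum>m\<in>I. T m)^2 + real k * (\<Sum>m\<in>I. T m)"
proof (induction k)
  case 0 thus ?case by (simp add: bern_eval_0)
next
  case (Suc k)
  have fI: "finite I" using I finite_subset by blast
  define t where "t = (\<Sum>m\<in>I. T m)"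
  define Y where "Y \<beta> = (\<Sum>m\<in>I. real (\<beta> m))" for \<beta> :: "nat \<Rightarrow> nat"
  have Ya: "Y (inc_at \<gamma> i) = Y \<gamma> + (if i \<in> I then 1 else 0)" for \<gamma> i
    unfolding Y_def inc_at_def uvec_def using fI
    by (simp add: sum.distrib if_distrib[where f=real] sum.delta cong: if_cong)
  have "casteljau n T (\<lambda>\<beta>. (Y \<beta>)^2) = (\<lambda>\<gamma>. (Y \<gamma>)^2 + 2 * t * Y \<gamma> + t)"
  proof
    fix \<gamma>
    have "casteljau n T (\<lambda>\<beta>. (Y \<beta>)^2) \<gamma>
            = (\<Sum>i\<le>n. T i * ((Y \<gamma>)^2 + 2 * Y \<gamma> * (if i \<in> I then 1 else 0)
                                  + (if i \<in> I then 1 else 0)))"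
      unfolding casteljau_def Ya
      by (intro sum.cong refl) (auto simp: power2_eq_square algebra_simps)
    also have "\<dots> = (\<Sum>i\<le>n. T i) * (Y \<gamma>)^2 + 2 * Y \<gamma> * (\<Sum>i\<le>n. T i * (if i \<in> I then 1 else 0))
                 + (\<Sum>i\<le>n. T i * (if i \<in> I then 1 else 0))"
      by (simp add: distrib_left sum.distrib sum_distrib_left sum_distrib_right mult_ac)
    also have "(\<Sum>i\<le>n. T i * (if i \<in> I then 1 else 0)) = t"
      unfolding t_def by (rule sum_mult_indicator[OF I])
    finally show "casteljau n T (\<lambda>\<beta>. (Y \<beta>)^2) \<gamma> = (Y \<gamma>)^2 + 2 * t * Y \<gamma> + t" using T1 by simp
  qed
  hence "bern_eval n (Suc k) (\<lambda>\<beta>. (Y \<beta>)^2) T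
           = bern_eval n k (\<lambda>\<beta>. (Y \<beta>)^2) T + 2 * t * bern_eval n k Y T + t"
    by (simp add: bern_eval_Suc bern_eval_add bern_eval_scale bern_eval_const T1)
  also have "bern_eval n k Y T = real k * t" unfolding Y_def t_def
    by (rule bern_eval_interval_sum[OF T1 I])
  finally show ?case using Suc unfolding Y_def t_def by (simp add: algebra_simps power2_eq_square)
qed

definition interval_variance :: "nat \<Rightarrow> (nat \<Rightarrow> real) \<Rightarrow> real" where
  "interval_variance n T =
     (\<Sum>a\<le>n. \<Sum>b\<le>n. if a < b then (\<Sum>m\<in>{a..<b}. T m) - (\<Sum>m\<in>{a..<b}. T m)^2 else 0)"

lemma bern_eval_grid_point_interval_sq:
  assumes \<alpha>: "\<alpha> \<in> mindex n k" and k: "k \<ge> 1" and I: "I \<subseteq> {..n}"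
  defines "t \<equiv> \<Sum>m\<in>I. grid_point \<alpha> k m"
  shows "bern_eval n k (\<lambda>\<beta>. (\<Sum>m\<in>I. real (\<beta> m))^2) (grid_point \<alpha> k) - (\<Sum>m\<in>I. real (\<alpha> m))^2
       = real k * (t - t^2)"
proof -
  have "(\<Sum>m\<in>I. real (\<alpha> m)) = real k * t"
    unfolding t_def grid_point_def sum_distrib_left using k by simp
  thus ?thesis
    unfolding bern_eval_interval_sum_sq[OF grid_point_sum[OF \<alpha> k] I] t_def[symmetric]
    by (simp add: power2_eq_square algebra_simps)
qed

lemma bern_eval_interval_sq_coef:
  assumes \<alpha>: "\<alpha> \<in> mindex n k" and k: "k \<ge> 1"
  shows "bern_eval n k (interval_sq_coef n) (grid_point \<alpha> k) - interval_sq_coef n \<alpha>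
       = real k / 2 * interval_variance n (grid_point \<alpha> k)"
proof -
  define T where "T = grid_point \<alpha> k"
  have "bern_eval n k (interval_sq_coef n) T - interval_sq_coef n \<alpha>
      = (\<Sum>a\<le>n. \<Sum>b\<le>n. bern_eval n k (\<lambda>\<beta>. if a < b then 1/2 * (\<Sum>m\<in>{a..<b}. real (\<beta> m))^2 else 0) T
                      - (if a < b then 1/2 * (\<Sum>m\<in>{a..<b}. real (\<alpha> m))^2 else 0))"
    unfolding interval_sq_coef_def by (simp only: bern_eval_sum finite_atMost sum_subtractf)
  also have "\<dots> = (\<Sum>a\<le>n. \<Sum>b\<le>n. real k / 2 *
                     (if a < b then (\<Sum>m\<in>{a..<b}. T m) - (\<Sum>m\<in>{a..<b}. T m)^2 else 0))"
  proof (intro sum.cong refl)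
    fix a b assume "b \<in> {..n}"
    hence "{a..<b} \<subseteq> {..n}" by auto
    moreover have "bern_eval n k (\<lambda>\<beta>. 1/2 * (\<Sum>m\<in>{a..<b}. real (\<beta> m))^2) T
        = 1/2 * bern_eval n k (\<lambda>\<beta>. (\<Sum>m\<in>{a..<b}. real (\<beta> m))^2) T"
      by (rule bern_eval_scale)
    ultimately show "bern_eval n k (\<lambda>\<beta>. if a < b then 1/2 * (\<Sum>m\<in>{a..<b}. real (\<beta> m))^2 else 0) T
          - (if a < b then 1/2 * (\<Sum>m\<in>{a..<b}. real (\<alpha> m))^2 else 0)
        = real k / 2 * (if a < b then (\<Sum>m\<in>{a..<b}. T m) - (\<Sum>m\<in>{a..<b}. T m)^2 else 0)"
      using bern_eval_grid_point_interval_sq[OF \<alpha> k, of "{a..<b}"] bern_eval_const[of n k 0 T]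
      unfolding T_def by (cases "a < b") (simp_all add: algebra_simps)
  qed
  finally show ?thesis unfolding interval_variance_def T_def by (simp only: sum_distrib_left)
qed

lemma sum_atMost_real: "(\<Sum>i\<le>m. real i) = real m * (real m + 1) / 2"
  by (induction m) (simp_all add: field_simps)

lemma sum_atMost_real_sq: "(\<Sum>i\<le>m. (real i)^2) = real m * (real m + 1) * (2 * real m + 1) / 6"
  by (induction m) (simp_all add: field_simps power2_eq_square)

lemma pairs_sum_Suc:
  "(\<Sum>a\<le>Suc n. \<Sum>b\<le>Suc n. if a < b then g a b else (0::real))
   = (\<Sum>a\<le>n. \<Sum>b\<le>n. if a < b then g a b else 0) + (\<Sum>a\<le>n. g a (Suc n))"
  by (simp add: sum.distrib)

lemma pairs_sum_dist:
  "(\<Sum>a\<le>n. \<Sum>b\<le>n. if a < b then real b - real a else 0) = real n * (real n + 1) * (real n + 2) / 6"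
proof (induction n)
  case 0 thus ?case by simp
next
  case (Suc n)
  have "(\<Sum>a\<le>n. real (Suc n) - real a) = (real n + 1) * (real n + 1) - real n * (real n + 1) / 2"
    by (simp add: sum_subtractf sum_atMost_real algebra_simps)
  thus ?case unfolding pairs_sum_Suc Suc by (simp add: field_simps)
qed

lemma pairs_sum_dist_sq:
  "(\<Sum>a\<le>n. \<Sum>b\<le>n. if a < b then (real b - real a)^2 else 0)
     = real n * (real n + 1)^2 * (real n + 2) / 12"
proof (induction n)
  case 0 thus ?case by simp
next
  case (Suc n)
  have "(\<Sum>a\<le>n. (real (Suc n) - real a)^2)
          = (\<Sum>a\<le>n. (real n + 1)^2 - 2 * (real n + 1) * real a + (real a)^2)"
    by (intro sum.cong refl) (simp add: power2_diff algebra_simps)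
  also have "\<dots> = (real n + 1) * (real n + 1)^2 - 2 * (real n + 1) * (real n * (real n + 1) / 2)
               + real n * (real n + 1) * (2 * real n + 1) / 6"
    by (simp add: sum.distrib sum_subtractf sum_distrib_left[symmetric]
        sum_atMost_real sum_atMost_real_sq)
  finally have e: "(\<Sum>a\<le>n. (real (Suc n) - real a)^2) = \<dots>" .
  show ?case unfolding pairs_sum_Suc Suc e by (simp add: field_simps power2_eq_square)
qed

lemma sum_pairs_across:
  fixes m n :: nat
  assumes "m \<le> n"
  shows "(\<Sum>a\<le>n. \<Sum>b\<le>n. if a \<le> m \<and> m < b then f a b else 0) = (\<Sum>a\<le>m. \<Sum>b\<in>{m<..n}. f a b)"
proof -
  have "{..n} \<inter> {b. m < b} = {m<..n}" "{..n} \<inter> {a. a \<le> m} = {..m}" using assms by auto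
  hence "(\<Sum>b\<le>n. if a \<le> m \<and> m < b then f a b else 0) = (if a \<le> m then \<Sum>b\<in>{m<..n}. f a b else 0)"
    and "(\<Sum>a\<le>n. if a \<le> m then g a else 0) = (\<Sum>a\<le>m. g a)" for a and g :: "nat \<Rightarrow> 'a"
    by (simp_all add: sum.If_cases)
  thus ?thesis by simp
qed

lemma sum_dist_across:
  assumes "m \<le> n"
  shows "(\<Sum>a\<le>m. \<Sum>b\<in>{m<..n}. real b - real a) = (real m + 1) * (real n - real m) * (real n + 1) / 2"
proof -
  have "{..n} - {..m} = {m<..n}" by auto
  hence b: "(\<Sum>b\<in>{m<..n}. real b) = (\<Sum>b\<le>n. real b) - (\<Sum>b\<le>m. real b)"
    using assms sum_diff[of "{..n}" "{..m}" real] by auto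
  have "(\<Sum>a\<le>m. \<Sum>b\<in>{m<..n}. real b - real a)
          = (\<Sum>a\<le>m. (\<Sum>b\<in>{m<..n}. real b) - (real n - real m) * real a)"
    using assms by (simp add: sum_subtractf of_nat_diff)
  also have "\<dots> = (real m + 1) * (\<Sum>b\<in>{m<..n}. real b) - (real n - real m) * (\<Sum>a\<le>m. real a)"
    by (simp add: sum_subtractf sum_distrib_left add.commute)
  finally show ?thesis unfolding b sum_atMost_real by (simp add: field_simps)
qed

lemma interval_weights_cancel:
  assumes "m \<le> n"
  shows "(\<Sum>a\<le>n. \<Sum>b\<le>n. if a \<le> m \<and> m < b then 1 - 2 * ((real b - real a) / (real n + 1)) else 0) = 0"
proof -
  have "(\<Sum>a\<le>m. \<Sum>b\<in>{m<..n}. 1 - 2 * ((real b - real a) / (real n + 1)))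
      = (\<Sum>a\<le>m. \<Sum>b\<in>{m<..n}. 1 - 2 / (real n + 1) * (real b - real a))"
    by simp
  also have "\<dots> = (\<Sum>a\<le>m. \<Sum>b\<in>{m<..n}. 1) - 2 / (real n + 1) * (\<Sum>a\<le>m. \<Sum>b\<in>{m<..n}. real b - real a)"
    by (simp only: sum_subtractf sum_distrib_left[symmetric])
  also have "\<dots> = 0"
    unfolding sum_dist_across[OF assms] using assms by (simp add: of_nat_diff field_simps)
  finally show ?thesis unfolding sum_pairs_across[OF assms] .
qed

lemma interval_cross_term_zero:
  fixes e :: "nat \<Rightarrow> real"
  shows "(\<Sum>a\<le>n. \<Sum>b\<le>n.
            if a < b then (\<Sum>m\<in>{a..<b}. e m) * (1 - 2 * ((real b - real a) / (real n + 1))) else 0) = 0"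
proof -
  define w where "w a b = 1 - 2 * ((real b - real a) / (real n + 1))" for a b :: nat
  have "(\<Sum>a\<le>n. \<Sum>b\<le>n. if a < b then (\<Sum>m\<in>{a..<b}. e m) * w a b else 0)
      = (\<Sum>a\<le>n. \<Sum>b\<le>n. \<Sum>m\<le>n. if a \<le> m \<and> m < b then e m * w a b else 0)"
  proof (intro sum.cong refl)
    fix a b assume "b \<in> {..n}"
    hence "{a..<b} = {m \<in> {..n}. a \<le> m \<and> m < b}" by auto
    hence "(\<Sum>m\<in>{a..<b}. e m) * w a b = (\<Sum>m\<in>{m \<in> {..n}. a \<le> m \<and> m < b}. e m * w a b)"
      by (simp only: sum_distrib_right)
    also have "\<dots> = (\<Sum>m\<le>n. if a \<le> m \<and> m < b then e m * w a b else 0)"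
      by (rule sum.inter_filter) simp
    finally show "(if a < b then (\<Sum>m\<in>{a..<b}. e m) * w a b else 0)
        = (\<Sum>m\<le>n. if a \<le> m \<and> m < b then e m * w a b else 0)" by auto
  qed
  also have "\<dots> = (\<Sum>m\<le>n. \<Sum>a\<le>n. \<Sum>b\<le>n. if a \<le> m \<and> m < b then e m * w a b else 0)"
    by (rule sum_swap3)
  also have "\<dots> = (\<Sum>m\<le>n. e m * (\<Sum>a\<le>n. \<Sum>b\<le>n. if a \<le> m \<and> m < b then w a b else 0))"
    unfolding sum_distrib_left by (intro sum.cong refl) auto
  also have "\<dots> = 0" unfolding w_def using interval_weights_cancel by simp
  finally show ?thesis unfolding w_def .
qed

lemma interval_variance_barycentre:
  "(\<Sum>a\<le>n. \<Sum>b\<le>n. if a < b then (real b - real a) / (real n + 1)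
     - ((real b - real a) / (real n + 1))^2 else 0)
     = real n * (real n + 2) / 12"
proof -
  have "(\<Sum>a\<le>n. \<Sum>b\<le>n. if a < b then (real b - real a) / (real n + 1)
          - ((real b - real a) / (real n + 1))^2 else 0)
      = (\<Sum>a\<le>n. \<Sum>b\<le>n. if a < b then real b - real a else 0) / (real n + 1)
        - (\<Sum>a\<le>n. \<Sum>b\<le>n. if a < b then (real b - real a)^2 else 0) / (real n + 1)^2"
    by (simp add: sum_divide_distrib sum_subtractf[symmetric] if_distrib[where f="\<lambda>x. x / _"]
        power_divide del: sum_subtractf cong: if_cong) (intro sum.cong refl, auto)
  also have "\<dots> = real n * (real n + 2) / 12"
  proof -
    have "real n * (real n + 1) * (real n + 2) / 6 / (real n + 1) = real n * (real n + 2) / 6"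
      and "real n * (real n + 1)^2 * (real n + 2) / 12 / (real n + 1)^2
             = real n * (real n + 2) / 12"
      by (simp_all add: field_simps)
    note e = this
    show ?thesis unfolding pairs_sum_dist pairs_sum_dist_sq e by simp
  qed
  finally show ?thesis .
qed

text \<open>Writing T = 1 / (n + 1) + e splits the interval variance into its value at the barycentre,
  a term linear in e, which vanishes identically by interval_cross_term_zero, and a nonpositive
  quadratic term.\<close>

lemma interval_variance_le:
  assumes T: "(\<Sum>i\<le>n. T i) = 1"
  shows "interval_variance n T \<le> real n * (real n + 2) / 12"
proof -
  define e where "e m = T m - 1 / (real n + 1)" for m
  define u where "u a b = (real b - real a) / (real n + 1)" for a b :: nat
  define s where "s a b = (\<Sum>m\<in>{a..<b}. e m)" for a b
  have "(\<Sum>m\<in>{a..<b}. T m) = u a b + s a b" if "a < b" for a b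
    unfolding s_def e_def u_def using that by (simp add: sum_subtractf of_nat_diff)
  hence "interval_variance n T
      = (\<Sum>a\<le>n. \<Sum>b\<le>n. if a < b then u a b - (u a b)^2 else 0)
        + (\<Sum>a\<le>n. \<Sum>b\<le>n. if a < b then s a b * (1 - 2 * u a b) else 0)
        - (\<Sum>a\<le>n. \<Sum>b\<le>n. if a < b then (s a b)^2 else 0)"
    unfolding interval_variance_def sum.distrib[symmetric] sum_subtractf[symmetric]
    by (intro sum.cong refl) (auto simp: power2_eq_square algebra_simps)
  also have "\<dots> = real n * (real n + 2) / 12 - (\<Sum>a\<le>n. \<Sum>b\<le>n. if a < b then (s a b)^2 else 0)"
    unfolding u_def s_def interval_variance_barycentre interval_cross_term_zero by simp
  also have "\<dots> \<le> real n * (real n + 2) / 12" by (simp add: sum_nonneg)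
  finally show ?thesis .
qed

lemma bern_eval_interval_sq_coef_le:
  assumes \<alpha>: "\<alpha> \<in> mindex n k" and k: "k \<ge> 1"
  shows "bern_eval n k (interval_sq_coef n) (grid_point \<alpha> k) - interval_sq_coef n \<alpha>
       \<le> real k / 2 * (real n * (real n + 2) / 12)"
  unfolding bern_eval_interval_sq_coef[OF assms]
  using interval_variance_le[OF grid_point_sum[OF assms]] by (intro mult_left_mono) auto

lemma bcoef_lower_bound:
  assumes g: "bern_repr n l g c" and g_nonneg: "\<forall>x\<in>simplex n. g x \<ge> 0" and M: "M \<ge> 0"
    and entries: "\<forall>\<nu>\<in>mindex n (l - 2). \<forall>i j. i < j \<longrightarrow> j \<le> n \<longrightarrow> \<bar>hess_entry n \<nu> (bcoef n l g) i j\<bar> \<le> M"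
    and "l \<le> k" and k: "2 \<le> k" and \<alpha>: "\<alpha> \<in> mindex n k"
  shows "bcoef n k g \<alpha> \<ge> - (real (n*(n+2)*l*(l-1)) / 24 * M / (real k - 1))"
proof -
  define \<mu> where "\<mu> = real (l*(l-1)) / real (k*(k-1)) * M"
  define h where "h = (\<lambda>\<beta>. bcoef n k g \<beta> - \<mu> * interval_sq_coef n \<beta>)"
  define T where "T = grid_point \<alpha> k"
  have concave: "concave_coef n k h"
    unfolding concave_coef_def
  proof (intro impI ballI allI)
    fix \<gamma> d assume "\<gamma> \<in> mindex n (k - 2)" and d: "(\<Sum>i\<le>n. d i) = (0::real)"
    hence "second_diff n \<gamma> (bcoef n k g) d \<le> \<mu> * interval_sq_sum n d"
      using second_diff_bcoef_le[OF g M entries d \<open>l \<le> k\<close>] unfolding \<mu>_def by auto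
    thus "second_diff n \<gamma> h d \<le> 0"
      unfolding h_def second_diff_diff second_diff_scale second_diff_interval_sq_coef[OF d] by simp
  qed
  hence "bern_eval n k (bcoef n k g) T - \<mu> * bern_eval n k (interval_sq_coef n) T
      \<le> bcoef n k g \<alpha> - \<mu> * interval_sq_coef n \<alpha>"
  proof -
    have "bern_eval n k h T \<le> h \<alpha>" unfolding T_def by (rule bern_eval_grid_point_le[OF \<alpha> concave])
    thus ?thesis unfolding h_def bern_eval_diff bern_eval_scale .
  qed
  moreover obtain x where "x \<in> simplex n" "bary n x = T"
    using grid_point_bary[OF \<alpha>] k unfolding T_def by auto
  hence "bern_eval n k (bcoef n k g) T \<ge> 0"
    using g_nonneg bcoef_bern_repr[OF g \<open>l \<le> k\<close>]
    unfolding bern_repr_def bern_eval_def bern_eq_bernstein by (auto simp: mult.commute)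
  moreover have "\<mu> * (bern_eval n k (interval_sq_coef n) T - interval_sq_coef n \<alpha>)
      \<le> \<mu> * (real k / 2 * (real n * (real n + 2) / 12))"
    unfolding T_def using bern_eval_interval_sq_coef_le[OF \<alpha>] k M \<mu>_def
    by (intro mult_left_mono) auto
  ultimately have "bcoef n k g \<alpha> \<ge> - (\<mu> * (real k / 2 * (real n * (real n + 2) / 12)))"
    unfolding right_diff_distrib by linarith
  also have "\<mu> * (real k / 2 * (real n * (real n + 2) / 12))
               = real (n*(n+2)*l*(l-1)) / 24 * M / (real k - 1)"
    unfolding \<mu>_def using k by (simp add: of_nat_diff field_simps)
  finally show ?thesis .
qed

text \<open>hess_norm n l is the Max of an empty set (an unspecified value) unless 1 \<le> n and 2 \<le> l;
  in the other cases the factor n (n + 2) l (l - 1) of omega vanishes and 0 serves as bound.\<close>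

definition hess_bound ::
  "nat \<Rightarrow> nat \<Rightarrow> ((nat \<Rightarrow> real) \<Rightarrow> real) \<Rightarrow> ((nat \<Rightarrow> real) \<Rightarrow> real) \<Rightarrow> real \<Rightarrow> real" where
  "hess_bound n l p q t = (if 1 \<le> n \<and> 2 \<le> l then hess_norm n l p + t * hess_norm n l q else 0)"

lemma hess_bound_nonneg: "t \<ge> 0 \<Longrightarrow> hess_bound n l p q t \<ge> 0"
  unfolding hess_bound_def using hess_norm_nonneg by simp

lemma hess_entry_le_hess_bound:
  assumes p: "bern_repr n l p cp" and q: "bern_repr n l q cq" and t: "t \<ge> 0"
    and \<nu>: "\<nu> \<in> mindex n (l - 2)" and ij: "i < j" "j \<le> n"
  shows "\<bar>hess_entry n \<nu> (bcoef n l (\<lambda>x. p x - t * q x)) i j\<bar> \<le> hess_bound n l p q t"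
proof (cases "2 \<le> l")
  case True
  have "hess_entry n \<nu> (bcoef n l (\<lambda>x. p x - t * q x)) i j
      = hess_entry n \<nu> (bcoef n l p) i j - t * hess_entry n \<nu> (bcoef n l q) i j"
    unfolding bcoef_diff_scale[OF p q order_refl] hess_entry_def by (simp add: algebra_simps)
  also have "\<bar>\<dots>\<bar> \<le> \<bar>hess_entry n \<nu> (bcoef n l p) i j\<bar> + t * \<bar>hess_entry n \<nu> (bcoef n l q) i j\<bar>"
  proof -
    have "\<bar>a - t * b\<bar> \<le> \<bar>a\<bar> + t * \<bar>b\<bar>" for a b :: real
      using abs_triangle_ineq4[of a "t * b"] t by (simp add: abs_mult)
    thus ?thesis .
  qed
  also have "\<dots> \<le> hess_norm n l p + t * hess_norm n l q"
    using hess_entry_le_hess_norm[OF \<nu> ij] t by (intro add_mono mult_left_mono) auto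
  finally show ?thesis unfolding hess_bound_def using True ij by simp
next
  case False
  have "bcoef n l (\<lambda>x. p x - t * q x) (madd3 \<nu> a b) = 0" if "a \<le> n" "b \<le> n" for a b
  proof -
    have "madd3 \<nu> a b \<notin> mindex n l"
      using madd3_mindex[OF \<nu> that] False mindex_degree_unique by fastforce
    thus ?thesis using bcoef_bern_repr[OF bern_repr_diff_scale[OF p q] order_refl]
      unfolding bern_repr_def by blast
  qed
  hence "hess_entry n \<nu> (bcoef n l (\<lambda>x. p x - t * q x)) i j = 0"
    unfolding hess_entry_def using ij prv_le_n[of i n] prv_le_n[of j n] by simp
  thus ?thesis using hess_bound_nonneg[OF t] by simp
qed

lemma hess_bound_le_omega:
  assumes "0 \<le> t" "t \<le> zeta n l p q" and m: "Min (bcoef n l q ` mindex n l) > 0"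
  shows "real (n*(n+2)*l*(l-1)) / 24 * hess_bound n l p q t
           \<le> Min (bcoef n l q ` mindex n l) * omega n l p q"
proof (cases "1 \<le> n \<and> 2 \<le> l")
  case True
  have "hess_bound n l p q t \<le> hess_norm n l p + zeta n l p q * hess_norm n l q"
    unfolding hess_bound_def using True assms(2) hess_norm_nonneg by (simp add: mult_right_mono)
  thus ?thesis unfolding omega_def using m by (simp add: mult_left_mono)
next
  case False
  hence "n*(n+2)*l*(l-1) = 0" by (cases "n = 0") auto
  hence z: "real (n*(n+2)*l*(l-1)) = 0" by (simp only: of_nat_0)
  show ?thesis unfolding omega_def z by simp
qed

lemma bcoef_pos_of_omega_bound:
  assumes p: "bern_repr n l p cp" and q: "bern_repr n l q cq"
    and q_pos: "\<forall>\<beta>\<in>mindex n l. bcoef n l q \<beta> > 0"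
    and f: "f > 0" "\<forall>x\<in>simplex n. f * q x \<le> p x" "f \<le> zeta n l p q"
    and "l \<le> k" and k: "real k > omega n l p q / f + 1" and \<alpha>: "\<alpha> \<in> mindex n k"
  shows "bcoef n k p \<alpha> > 0"
proof -
  define m where "m = Min (bcoef n l q ` mindex n l)"
  define C where "C = real (n*(n+2)*l*(l-1)) / 24"
  define H where "H = hess_bound n l p q f"
  have m: "m > 0" unfolding m_def by (rule Min_bcoef_pos[OF q_pos])
  have CH: "C * H \<le> m * omega n l p q"
    unfolding C_def H_def m_def using f m by (intro hess_bound_le_omega) (auto simp: m_def)
  have H: "H \<ge> 0" unfolding H_def using f by (intro hess_bound_nonneg) simp
  hence "0 \<le> C * H" unfolding C_def by simp
  hence "0 \<le> m * omega n l p q" using CH by linarith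
  hence "omega n l p q / f \<ge> 0" using m f by (simp add: zero_le_mult_iff)
  hence k2: "2 \<le> k" using k by linarith
  have "C * H / (real k - 1) < f * m"
  proof -
    have "omega n l p q / f < real k - 1" using k by linarith
    hence "omega n l p q < f * (real k - 1)" using f by (simp add: divide_less_eq mult.commute)
    hence "m * omega n l p q < m * (f * (real k - 1))" using m by simp
    hence "C * H < f * m * (real k - 1)" using CH by (simp add: mult_ac)
    thus ?thesis using k2 by (simp add: divide_less_eq)
  qed
  moreover have "bcoef n k (\<lambda>x. p x - f * q x) \<alpha> \<ge> - (C * H / (real k - 1))"
    unfolding C_def H_def
    using bcoef_lower_bound[OF bern_repr_diff_scale[OF p q] _ hess_bound_nonneg _ \<open>l \<le> k\<close> k2 \<alpha>]
      f hess_entry_le_hess_bound[OF p q] by (simp add: mult.assoc)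
  moreover have "f * m \<le> f * bcoef n k q \<alpha>"
    using bcoef_ge_Min[OF q \<open>l \<le> k\<close>] \<alpha> f unfolding m_def by simp
  ultimately show ?thesis unfolding bcoef_diff_scale[OF p q \<open>l \<le> k\<close>] by simp
qed

theorem proposition5p3:
  fixes n l k :: nat and p q :: "(nat \<Rightarrow> real) \<Rightarrow> real"
  assumes "is_poly n l p" and "is_poly n l q"
    and "\<forall>x\<in>simplex n. p x / q x > 0"
    and "\<forall>j\<ge>l. \<forall>\<alpha>\<in>mindex n j. bcoef n j q \<alpha> > 0"
    and "(INF x\<in>simplex n. p x / q x) > 0"
    and "k \<ge> l"
    and "real k > omega n l p q / (INF x\<in>simplex n. p x / q x) + 1"
  shows "(\<forall>\<alpha>\<in>mindex n k. bcoef_rat n k p q \<alpha> \<ge> 0)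
       \<and> (\<forall>i\<le>n. bcoef_rat n k p q (\<lambda>j. k * uvec i j) > 0)"
proof -
  define f where "f = (INF x\<in>simplex n. p x / q x)"
  obtain cp cq where p: "bern_repr n l p cp" and q: "bern_repr n l q cq"
    using is_poly_bern_repr assms(1,2) by metis
  have q_pos: "\<forall>\<beta>\<in>mindex n l. bcoef n l q \<beta> > 0" using assms(4) by simp
  have f_le: "f \<le> p x / q x" if "x \<in> simplex n" for x
    unfolding f_def using assms(3) that
    by (intro cINF_lower bdd_belowI2[where m=0]) (auto intro: less_imp_le)
  have "\<forall>x\<in>simplex n. f * q x \<le> p x"
    using f_le bern_repr_pos[OF q q_pos] by (simp add: le_divide_eq)
  moreover have "f \<le> zeta n l p q"
    using f_le ratio_le_zeta[OF p q q_pos] zero_in_simplex by (meson order_trans)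
  ultimately have "\<forall>\<alpha>\<in>mindex n k. bcoef n k p \<alpha> > 0"
    using bcoef_pos_of_omega_bound[OF p q q_pos] assms(5-7) unfolding f_def by blast
  hence "\<forall>\<alpha>\<in>mindex n k. bcoef_rat n k p q \<alpha> > 0"
    using assms(4,6) unfolding bcoef_rat_def by simp
  thus ?thesis using vertex_mindex by (auto intro: less_imp_le)
qed

end
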